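(* Let $\Gamma$ be the rank four incidence system defined in the context from the cube. Then $\Gamma$ is an incidence geometric representation for the group $\mathrm{Sym}(4)\times C_2$.
   Context: An incidence system is a quadruple $\Gamma=(X,*,t,I)$ where $X$ is a set of elements, $I$ a finite set of types, $t:X\to I$ a surjective type function, and $*$ a symmetric binary relation on $X$ (incidence) such that no two elements of the same type are incident. A correlation of $\Gamma$ is a permutation $\alpha$ of $X$ such that for all $x,y\in X$: $t(x)=t(y)\iff t(\alpha(x))=t(\alpha(y))$, and $x*y\iff \alpha(x)*\alpha(y)$. The correlations form a group $\mathrm{Aut}(\Gamma)$; its normal subgroup of type-preserving correlations is $\mathrm{Aut}_I(\Gamma)$. An incidence geometric representation for a group $G$ is an incidence system $\Gamma$ together with isomorphisms $\varphi_1:\mathrm{Inn}(G)\to\mathrm{Aut}_I(\Gamma)$ and $\varphi_2:\mathrm{Aut}(G)\to\mathrm{Aut}(\Gamma)$ with $\varphi_2|_{\mathrm{Inn}(G)}=\varphi_1$. Construction: consider the 3-dimensional cube with its 8 vertices, 12 edges and 6 square faces. The graph formed by its vertices and edges is bipartite; let $\{P_1,P_2\}$ be its proper 2-coloring (the vertex sets of the two tetrahedra inscribed in the cube). The elements of $\Gamma$ of type $1$ are the vertices in $P_1$, of type $2$ the vertices in $P_2$, of type $3$ the edges of the cube, and of type $4$ the faces of the cube. Incidence is induced from the cube: a vertex and an edge/face are incident iff the vertex lies on it, an edge and a face are incident iff the edge lies on the face; two vertices are never incident. *)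

theory Defs
  imports "HOL-Algebra.Algebra"
begin

definition incidence_system ::
  "'x set \<Rightarrow> ('x \<Rightarrow> 'x \<Rightarrow> bool) \<Rightarrow> ('x \<Rightarrow> 'i) \<Rightarrow> 'i set \<Rightarrow> bool" where
  "incidence_system E inc t Ty \<longleftrightarrow>
     finite Ty \<and> t ` E = Ty \<and>
     (\<forall>x\<in>E. \<forall>y\<in>E. inc x y \<longleftrightarrow> inc y x) \<and>
     (\<forall>x\<in>E. \<forall>y\<in>E. t x = t y \<longrightarrow> \<not> inc x y)"

text \<open>Correlations: permutations of E preserving type-equality and incidence.
  They are taken extensional (as elements of Bij E) so that they form a group
  under composition.\<close>

definition correlations ::
  "'x set \<Rightarrow> ('x \<Rightarrow> 'x \<Rightarrow> bool) \<Rightarrow> ('x \<Rightarrow> 'i) \<Rightarrow> ('x \<Rightarrow> 'x) set" where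
  "correlations E inc t =
     {\<alpha> \<in> Bij E. \<forall>x\<in>E. \<forall>y\<in>E.
         (t x = t y \<longleftrightarrow> t (\<alpha> x) = t (\<alpha> y)) \<and> (inc x y \<longleftrightarrow> inc (\<alpha> x) (\<alpha> y))}"

definition type_preserving_correlations ::
  "'x set \<Rightarrow> ('x \<Rightarrow> 'x \<Rightarrow> bool) \<Rightarrow> ('x \<Rightarrow> 'i) \<Rightarrow> ('x \<Rightarrow> 'x) set" where
  "type_preserving_correlations E inc t =
     {\<alpha> \<in> correlations E inc t. \<forall>x\<in>E. t (\<alpha> x) = t x}"

definition CorGroup ::
  "'x set \<Rightarrow> ('x \<Rightarrow> 'x \<Rightarrow> bool) \<Rightarrow> ('x \<Rightarrow> 'i) \<Rightarrow> ('x \<Rightarrow> 'x) monoid" where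
  "CorGroup E inc t = BijGroup E \<lparr>carrier := correlations E inc t\<rparr>"

definition TypePresCorGroup ::
  "'x set \<Rightarrow> ('x \<Rightarrow> 'x \<Rightarrow> bool) \<Rightarrow> ('x \<Rightarrow> 'i) \<Rightarrow> ('x \<Rightarrow> 'x) monoid" where
  "TypePresCorGroup E inc t = BijGroup E \<lparr>carrier := type_preserving_correlations E inc t\<rparr>"

definition inner_autos :: "('a, 'b) monoid_scheme \<Rightarrow> ('a \<Rightarrow> 'a) set" where
  "inner_autos G =
     {(\<lambda>x \<in> carrier G. g \<otimes>\<^bsub>G\<^esub> x \<otimes>\<^bsub>G\<^esub> inv\<^bsub>G\<^esub> g) | g. g \<in> carrier G}"

definition InnGroup :: "('a, 'b) monoid_scheme \<Rightarrow> ('a \<Rightarrow> 'a) monoid" where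
  "InnGroup G = AutoGroup G \<lparr>carrier := inner_autos G\<rparr>"

definition incidence_geometric_representation ::
  "('a, 'b) monoid_scheme \<Rightarrow> 'x set \<Rightarrow> ('x \<Rightarrow> 'x \<Rightarrow> bool) \<Rightarrow> ('x \<Rightarrow> 'i) \<Rightarrow> 'i set \<Rightarrow> bool"
  where
  "incidence_geometric_representation G E inc t Ty \<longleftrightarrow>
     incidence_system E inc t Ty \<and>
     (\<exists>\<phi>1 \<phi>2.
        \<phi>1 \<in> iso (InnGroup G) (TypePresCorGroup E inc t) \<and>
        \<phi>2 \<in> iso (AutoGroup G) (CorGroup E inc t) \<and>
        (\<forall>\<sigma> \<in> carrier (InnGroup G). \<phi>2 \<sigma> = \<phi>1 \<sigma>))"

text \<open>Every element of the geometry is represented by the set of cube vertices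
  lying on it: a vertex v by {v}, an edge by its two endpoints, a face by its
  four vertices.\<close>

type_synonym cvert = "bool \<times> bool \<times> bool"

fun coord :: "cvert \<Rightarrow> nat \<Rightarrow> bool" where
  "coord (a, b, c) i = (if i = 0 then a else if i = 1 then b else c)"

definition cube_vertices :: "cvert set set" where
  "cube_vertices = {{v} | v. True}"

definition cube_edges :: "cvert set set" where
  "cube_edges = {{u, v} | u v. card {i. i < 3 \<and> coord u i \<noteq> coord v i} = 1}"

definition cube_faces :: "cvert set set" where
  "cube_faces = {{v. coord v i = b} | i b. i < 3}"

definition cube_X :: "cvert set set" where
  "cube_X = cube_vertices \<union> cube_edges \<union> cube_faces"

text \<open>Parity (number of True coordinates) gives the proper 2-colouring of the
  cube graph: P1 = even vertices (type 1), P2 = odd vertices (type 2).\<close>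

definition even_vertex :: "cvert \<Rightarrow> bool" where
  "even_vertex v \<longleftrightarrow> even (card {i. i < 3 \<and> coord v i})"

definition cube_type :: "cvert set \<Rightarrow> nat" where
  "cube_type x =
     (if x \<in> cube_vertices then (if even_vertex (THE v. x = {v}) then 1 else 2)
      else if x \<in> cube_edges then 3 else 4)"

definition cube_inc :: "cvert set \<Rightarrow> cvert set \<Rightarrow> bool" where
  "cube_inc x y \<longleftrightarrow> x \<subset> y \<or> y \<subset> x"

definition cube_I :: "nat set" where
  "cube_I = {1, 2, 3, 4}"

definition Sym4xC2 :: "((nat \<Rightarrow> nat) \<times> int) monoid" where
  "Sym4xC2 = sym_group 4 \<times>\<times> integer_mod_group 2"

end

theory Submission
  imports Defs
begin

text \<open>
  Both \<open>Aut(S\<^sub>4 \<times> C\<^sub>2)\<close> and the correlation group of the cube are identified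
  with \<open>S\<^sub>4 \<times> C\<^sub>2\<close> itself.
  An automorphism \<open>\<alpha>\<close> of \<open>S\<^sub>4 \<times> C\<^sub>2\<close> fixes the only non-trivial central element
  \<open>(id, 1)\<close>, so it is determined by \<open>\<alpha>(p, 0) = (\<beta> p, \<delta> p)\<close>.  Here \<open>\<beta>\<close> is an
  automorphism of \<open>S\<^sub>4\<close>; it is inner because the images of the Coxeter generators are
  involutions satisfying the Coxeter relations, hence simultaneously conjugate to the generators.
  And \<open>\<delta>\<close> is a homomorphism to \<open>C\<^sub>2\<close>, hence trivial or the sign.  Thus the automorphisms
  are \<open>(p, c) \<mapsto> (g p g\<^sup>-\<^sup>1, c + e \<cdot> sgn p)\<close>, the inner ones being those with \<open>e = 0\<close>.

  On the cube, \<open>S\<^sub>4\<close> acts as the symmetry group of the inscribed tetrahedron \<open>P\<^sub>1\<close>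
  and the generator of \<open>C\<^sub>2\<close> as the antipodal map; this gives a faithful action by correlations,
  type-preserving exactly for \<open>e = 0\<close>.  Conversely a correlation maps vertices to vertices (the
  two vertex types are the only pair of types without incidences), so it is induced by a
  permutation of the vertices; that permutation commutes with the antipodal map (antipodal
  vertices are the pairs without a common incident element) and keeps or swaps the two tetrahedra,
  hence comes from \<open>S\<^sub>4 \<times> C\<^sub>2\<close>.
\<close>

section \<open>Permutations of \<open>{1..4}\<close>\<close>

declare One_nat_def [simp del]

definition perm4 :: "nat \<Rightarrow> nat \<Rightarrow> nat \<Rightarrow> nat \<Rightarrow> nat \<Rightarrow> nat" where
  "perm4 a b c d =
     (\<lambda>i. if i = 1 then a else if i = 2 then b else if i = 3 then c else if i = 4 then d else i)"

lemma perm4_simps [simp]: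
  "perm4 a b c d 1 = a" "perm4 a b c d 2 = b" "perm4 a b c d 3 = c" "perm4 a b c d 4 = d"
  by (simp_all add: perm4_def)

lemma comp_perm4 [simp]:
  "perm4 a b c d \<circ> perm4 a' b' c' d' =
     perm4 (perm4 a b c d a') (perm4 a b c d b') (perm4 a b c d c') (perm4 a b c d d')"
  by (rule ext) (simp add: perm4_def)

lemma perm4_eq_iff [simp]:
  "perm4 a b c d = perm4 a' b' c' d' \<longleftrightarrow> a = a' \<and> b = b' \<and> c = c' \<and> d = d'"
proof
  assume "perm4 a b c d = perm4 a' b' c' d'"
  from fun_cong[OF this, of 1] fun_cong[OF this, of 2] fun_cong[OF this, of 3] fun_cong[OF this, of 4]
  show "a = a' \<and> b = b' \<and> c = c' \<and> d = d'" by simp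
qed simp

lemma id_eq_perm4: "id = perm4 1 2 3 4"
  by (rule ext) (simp add: perm4_def)

lemma permutes_eq_perm4:
  assumes "p permutes {1..4}"
  shows "p = perm4 (p 1) (p 2) (p 3) (p 4)"
proof (rule ext)
  fix i show "p i = perm4 (p 1) (p 2) (p 3) (p 4) i"
    using permutes_not_in[OF assms, of i] by (auto simp: perm4_def)
qed

lemma perm4_permutes:
  assumes "a \<in> {1..4}" "b \<in> {1..4}" "c \<in> {1..4}" "d \<in> {1..4}"
    and "distinct [a, b, c, d]"
  shows "perm4 a b c d permutes {1..4}"
proof (rule bij_imp_permutes)
  have four: "{1..4::nat} = {1, 2, 3, 4}" by auto
  show "bij_betw (perm4 a b c d) {1..4} {1..4}"
    using assms unfolding four by (auto simp: bij_betw_def inj_on_def)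
qed (auto simp: perm4_def)

definition perms4 :: "(nat \<Rightarrow> nat) set" where
  "perms4 =
     {perm4 1 2 3 4, perm4 1 2 4 3, perm4 1 3 2 4, perm4 1 3 4 2, perm4 1 4 2 3, perm4 1 4 3 2,
      perm4 2 1 3 4, perm4 2 1 4 3, perm4 2 3 1 4, perm4 2 3 4 1, perm4 2 4 1 3, perm4 2 4 3 1,
      perm4 3 1 2 4, perm4 3 1 4 2, perm4 3 2 1 4, perm4 3 2 4 1, perm4 3 4 1 2, perm4 3 4 2 1,
      perm4 4 1 2 3, perm4 4 1 3 2, perm4 4 2 1 3, perm4 4 2 3 1, perm4 4 3 1 2, perm4 4 3 2 1}"

lemma permutes_4_eq_perms4: "{p. p permutes {1..4}} = perms4"
proof (rule card_subset_eq[symmetric])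
  show "finite {p. p permutes {1..4::nat}}" by (rule finite_permutations) simp
  show "perms4 \<subseteq> {p. p permutes {1..4}}"
    unfolding perms4_def by (auto intro!: perm4_permutes)
  show "card perms4 = card {p. p permutes {1..4::nat}}"
    using card_permutations[of "{1..4::nat}" 4] by (simp add: perms4_def fact_numeral)
qed

lemma permutes_4_in_perms4: "p permutes {1..4} \<Longrightarrow> p \<in> perms4"
  using permutes_4_eq_perms4 by blast

abbreviation "s1 \<equiv> perm4 2 1 3 4"
abbreviation "s2 \<equiv> perm4 1 3 2 4"
abbreviation "s3 \<equiv> perm4 1 2 4 3"

lemma generators_permute: "s1 permutes {1..4}" "s2 permutes {1..4}" "s3 permutes {1..4}"
  by (auto intro!: perm4_permutes)

lemma transpose_4_generated:
  assumes "a \<in> {1..4}" "b \<in> {1..4}" "a \<noteq> b"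
  shows "Transposition.transpose a b \<in>
           {s1, s2, s3, s1 \<circ> s2 \<circ> s1, s2 \<circ> s3 \<circ> s2, s1 \<circ> s2 \<circ> s3 \<circ> s2 \<circ> s1}"
proof -
  have "Transposition.transpose a b = perm4 (Transposition.transpose a b 1)
      (Transposition.transpose a b 2) (Transposition.transpose a b 3) (Transposition.transpose a b 4)"
    using assms by (intro permutes_eq_perm4 permutes_swap_id) auto
  moreover have "a = 1 \<or> a = 2 \<or> a = 3 \<or> a = 4" "b = 1 \<or> b = 2 \<or> b = 3 \<or> b = 4"
    using assms by auto
  ultimately show ?thesis
    using assms(3) by (elim disjE) (simp_all add: transpose_def)
qed

lemma permutes_4_induct [consumes 1, case_names id gen]:
  assumes "p permutes {1..4}"
    and "P id"
    and "\<And>s q. s \<in> {s1, s2, s3} \<Longrightarrow> q permutes {1..4} \<Longrightarrow> P q \<Longrightarrow> P (s \<circ> q)"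
  shows "P p"
  using assms(1) finite_atLeastAtMost
proof (induction rule: permutes_induct)
  case id
  show ?case using assms(2) .
next
  case (swap a b q)
  define Q where "Q r \<longleftrightarrow> r permutes {1..4} \<and> P r" for r
  have gen: "Q (s1 \<circ> r)" "Q (s2 \<circ> r)" "Q (s3 \<circ> r)" if "Q r" for r
    using that assms(3) generators_permute by (auto simp: Q_def intro: permutes_compose)
  have "Q q" using swap(4,5) by (simp add: Q_def)
  then have "Q (Transposition.transpose a b \<circ> q)"
    using transpose_4_generated[OF swap(1-3)]
    by (elim insertE emptyE) (simp_all only: comp_assoc gen)
  then show ?case unfolding Q_def ..
qed

section \<open>Automorphisms of \<open>S\<^sub>4 \<times> C\<^sub>2\<close>\<close>

lemma carrier_integer_mod_group_2: "carrier (integer_mod_group 2) = {0, 1}"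
  by (auto simp: carrier_integer_mod_group)

lemma sym_group_4_hom_eqI:
  assumes "group H" and f: "f \<in> hom (sym_group 4) H" and f': "f' \<in> hom (sym_group 4) H"
    and "f s1 = f' s1" "f s2 = f' s2" "f s3 = f' s3"
    and "p permutes {1..4}"
  shows "f p = f' p"
  using assms(7)
proof (induction rule: permutes_4_induct)
  case id
  interpret f: group_hom "sym_group 4" H f
    using assms(1) f by (simp add: group_hom_def group_hom_axioms_def sym_group_is_group)
  interpret f': group_hom "sym_group 4" H f'
    using assms(1) f' by (simp add: group_hom_def group_hom_axioms_def sym_group_is_group)
  show ?case using f.hom_one f'.hom_one by (simp only: sym_group_one)
next
  case (gen s q)
  have s: "s \<in> carrier (sym_group 4)" and q: "q \<in> carrier (sym_group 4)"
    using gen(1,2) generators_permute by (auto simp: sym_group_carrier)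
  have "f s = f' s" using gen(1) assms(4-6) by blast
  then show ?case
    using hom_mult[OF f s q] hom_mult[OF f' s q] gen(3) by (simp only: sym_group_mult)
qed

lemma commutes_with_s1_s2_imp_id:
  assumes "g permutes {1..4}" "g \<circ> s1 = s1 \<circ> g" "g \<circ> s2 = s2 \<circ> g"
  shows "g = id"
  using permutes_4_in_perms4[OF assms(1)] assms(2,3) unfolding perms4_def id_eq_perm4
  by (elim insertE emptyE; simp)

definition involutions4 :: "(nat \<Rightarrow> nat) set" where
  "involutions4 =
     {perm4 1 2 4 3, perm4 1 3 2 4, perm4 1 4 3 2, perm4 2 1 3 4, perm4 2 1 4 3, perm4 3 2 1 4,
      perm4 3 4 1 2, perm4 4 2 3 1, perm4 4 3 2 1}"

lemma involution_in_involutions4: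
  assumes "x permutes {1..4}" "x \<circ> x = id" "x \<noteq> id"
  shows "x \<in> involutions4"
  using permutes_4_in_perms4[OF assms(1)] assms(2,3) unfolding perms4_def id_eq_perm4 involutions4_def
  by (elim insertE emptyE; simp)

text \<open>The heart of \<open>Aut(S\<^sub>4) = Inn(S\<^sub>4)\<close>; checked over all triples of the nine involutions.\<close>

lemma coxeter_triple_conjugate:
  assumes "x1 \<in> involutions4" "x2 \<in> involutions4" "x3 \<in> involutions4"
    and "x1 \<noteq> x2" "x2 \<noteq> x3" "x1 \<noteq> x3"
    and "x1 \<circ> x2 \<circ> x1 = x2 \<circ> x1 \<circ> x2" "x2 \<circ> x3 \<circ> x2 = x3 \<circ> x2 \<circ> x3" "x1 \<circ> x3 = x3 \<circ> x1"
  shows "\<exists>g\<in>perms4. x1 \<circ> g = g \<circ> s1 \<and> x2 \<circ> g = g \<circ> s2 \<and> x3 \<circ> g = g \<circ> s3"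
  using assms unfolding involutions4_def
  apply (elim insertE emptyE)
  apply simp_all
  apply (simp_all add: perms4_def)
  done

lemma conj_sym_group_hom:
  assumes "g permutes {1..n}"
  shows "(\<lambda>p. g \<circ> p \<circ> inv' g) \<in> hom (sym_group n) (sym_group n)"
proof (rule homI)
  fix p assume "p \<in> carrier (sym_group n)"
  then show "g \<circ> p \<circ> inv' g \<in> carrier (sym_group n)"
    using assms by (auto simp: sym_group_carrier intro!: permutes_compose permutes_inv)
next
  fix p q
  have "g \<circ> (p \<circ> q) \<circ> inv' g = g \<circ> p \<circ> (inv' g \<circ> g) \<circ> q \<circ> inv' g"
    using permutes_inv_o(2)[OF assms] by (simp add: o_assoc)
  then show "g \<circ> (p \<otimes>\<^bsub>sym_group n\<^esub> q) \<circ> inv' g =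
      (g \<circ> p \<circ> inv' g) \<otimes>\<^bsub>sym_group n\<^esub> (g \<circ> q \<circ> inv' g)"
    by (simp add: sym_group_mult o_assoc)
qed

lemma sym_group_4_inj_endo_is_conj:
  assumes hom: "\<beta> \<in> hom (sym_group 4) (sym_group 4)"
    and inj: "inj_on \<beta> {p. p permutes {1..4}}"
  shows "\<exists>g. g permutes {1..4} \<and> (\<forall>p. p permutes {1..4} \<longrightarrow> \<beta> p = g \<circ> p \<circ> inv' g)"
proof -
  interpret \<beta>: group_hom "sym_group 4" "sym_group 4" \<beta>
    using hom by (simp add: group_hom_def group_hom_axioms_def sym_group_is_group)
  have \<beta>_perm: "\<beta> p permutes {1..4}" if "p permutes {1..4}" for p
    using hom_in_carrier[OF hom] that by (simp add: sym_group_carrier)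
  have \<beta>_comp: "\<beta> (p \<circ> q) = \<beta> p \<circ> \<beta> q" if "p permutes {1..4}" "q permutes {1..4}" for p q
    using hom_mult[OF hom] that by (simp add: sym_group_carrier sym_group_mult)
  have \<beta>_comp3: "\<beta> (p \<circ> q \<circ> r) = \<beta> p \<circ> \<beta> q \<circ> \<beta> r"
    if "p permutes {1..4}" "q permutes {1..4}" "r permutes {1..4}" for p q r
    using that by (simp add: \<beta>_comp permutes_compose)
  have \<beta>_id: "\<beta> id = id" using \<beta>.hom_one by (simp add: sym_group_one)
  have \<beta>_eq: "\<beta> p = \<beta> q \<longleftrightarrow> p = q" if "p permutes {1..4}" "q permutes {1..4}" for p q
    using inj that by (auto dest: inj_onD)
  have invol: "\<beta> s \<in> involutions4" if "s \<in> {s1, s2, s3}" for s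
  proof (rule involution_in_involutions4)
    have s: "s permutes {1..4}" "s \<circ> s = id" "s \<noteq> id"
      using that generators_permute by (auto simp: id_eq_perm4)
    show "\<beta> s permutes {1..4}" using \<beta>_perm[OF s(1)] .
    show "\<beta> s \<circ> \<beta> s = id" using \<beta>_comp[OF s(1) s(1)] s(2) \<beta>_id by simp
    show "\<beta> s \<noteq> id" using \<beta>_eq[OF s(1) permutes_id] s(3) \<beta>_id by simp
  qed
  note s = generators_permute
  have "\<exists>g\<in>perms4. \<beta> s1 \<circ> g = g \<circ> s1 \<and> \<beta> s2 \<circ> g = g \<circ> s2 \<and> \<beta> s3 \<circ> g = g \<circ> s3"
  proof (rule coxeter_triple_conjugate)
    show "\<beta> s1 \<in> involutions4" "\<beta> s2 \<in> involutions4" "\<beta> s3 \<in> involutions4"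
      using invol by simp_all
    show "\<beta> s1 \<noteq> \<beta> s2" "\<beta> s2 \<noteq> \<beta> s3" "\<beta> s1 \<noteq> \<beta> s3"
      using \<beta>_eq[OF s(1) s(2)] \<beta>_eq[OF s(2) s(3)] \<beta>_eq[OF s(1) s(3)] by simp_all
    show "\<beta> s1 \<circ> \<beta> s2 \<circ> \<beta> s1 = \<beta> s2 \<circ> \<beta> s1 \<circ> \<beta> s2"
      using \<beta>_comp3[OF s(1) s(2) s(1)] \<beta>_comp3[OF s(2) s(1) s(2)] by simp
    show "\<beta> s2 \<circ> \<beta> s3 \<circ> \<beta> s2 = \<beta> s3 \<circ> \<beta> s2 \<circ> \<beta> s3"
      using \<beta>_comp3[OF s(2) s(3) s(2)] \<beta>_comp3[OF s(3) s(2) s(3)] by simp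
    show "\<beta> s1 \<circ> \<beta> s3 = \<beta> s3 \<circ> \<beta> s1"
      using \<beta>_comp[OF s(1) s(3)] \<beta>_comp[OF s(3) s(1)] by simp
  qed
  then obtain g where "g \<in> perms4"
    and g: "\<beta> s1 \<circ> g = g \<circ> s1" "\<beta> s2 \<circ> g = g \<circ> s2" "\<beta> s3 \<circ> g = g \<circ> s3"
    by blast
  then have g_perm: "g permutes {1..4}" using permutes_4_eq_perms4 by blast
  have conj: "\<beta> s = g \<circ> s \<circ> inv' g" if "\<beta> s \<circ> g = g \<circ> s" for s
  proof -
    have "\<beta> s = \<beta> s \<circ> (g \<circ> inv' g)" using permutes_inv_o(1)[OF g_perm] by simp
    then have "\<beta> s = \<beta> s \<circ> g \<circ> inv' g" by (simp only: o_assoc)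
    then show ?thesis using that by simp
  qed
  have "\<beta> p = g \<circ> p \<circ> inv' g" if "p permutes {1..4}" for p
    by (rule sym_group_4_hom_eqI[OF sym_group_is_group hom conj_sym_group_hom[OF g_perm]])
      (use conj[OF g(1)] conj[OF g(2)] conj[OF g(3)] that in simp_all)
  with g_perm show ?thesis by blast
qed

definition perm_parity :: "(nat \<Rightarrow> nat) \<Rightarrow> int" where
  "perm_parity p = (if evenperm p then 0 else 1)"

lemma perm_parity_range: "perm_parity p \<in> {0, 1}"
  by (simp add: perm_parity_def)

lemma perm_parity_comp:
  assumes "p permutes {1..n}" "q permutes {1..n}"
  shows "perm_parity (p \<circ> q) = (perm_parity p + perm_parity q) mod 2"
  using evenperm_comp[OF permutes_imp_permutation permutes_imp_permutation, OF _ assms(1) _ assms(2)]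
  by (auto simp: perm_parity_def)

lemma perm_parity_conj:
  assumes "g permutes {1..n}" "p permutes {1..n}"
  shows "perm_parity (g \<circ> p \<circ> inv' g) = perm_parity p"
proof -
  have perm: "permutation g" "permutation p" "permutation (inv' g)"
    using assms permutes_inv[OF assms(1)] by (auto intro: permutes_imp_permutation)
  then have "evenperm (g \<circ> p \<circ> inv' g) = ((evenperm g = evenperm p) = evenperm g)"
    by (simp add: evenperm_comp permutation_compose evenperm_inv)
  then show ?thesis by (auto simp: perm_parity_def)
qed

lemma perm_parity_generators: "perm_parity s1 = 1" "perm_parity s2 = 1" "perm_parity s3 = 1"
proof -
  have "s1 = Transposition.transpose 1 2" "s2 = Transposition.transpose 2 3"
    "s3 = Transposition.transpose 3 4"
    by (auto simp: fun_eq_iff transpose_def perm4_def)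
  then show "perm_parity s1 = 1" "perm_parity s2 = 1" "perm_parity s3 = 1"
    by (simp_all add: perm_parity_def evenperm_swap)
qed

lemma scaled_parity_hom:
  assumes "e \<in> {0, 1}"
  shows "(\<lambda>p. e * perm_parity p) \<in> hom (sym_group n) (integer_mod_group 2)"
proof (rule homI)
  fix p assume "p \<in> carrier (sym_group n)"
  show "e * perm_parity p \<in> carrier (integer_mod_group 2)"
    using assms perm_parity_range[of p] by (auto simp: carrier_integer_mod_group_2)
next
  fix p q assume "p \<in> carrier (sym_group n)" "q \<in> carrier (sym_group n)"
  then have "perm_parity (p \<circ> q) = (perm_parity p + perm_parity q) mod 2"
    by (simp add: sym_group_carrier perm_parity_comp)
  then show "e * perm_parity (p \<otimes>\<^bsub>sym_group n\<^esub> q) =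
      (e * perm_parity p) \<otimes>\<^bsub>integer_mod_group 2\<^esub> (e * perm_parity q)"
    using assms perm_parity_range[of p] perm_parity_range[of q]
    by (auto simp: sym_group_mult)
qed

text \<open>In the abelian group \<open>C\<^sub>2\<close> the braid relation between \<open>s\<^sub>i\<close> and \<open>s\<^sub>i\<^sub>+\<^sub>1\<close>
  forces equal values on them.\<close>

lemma sym_group_4_hom_C2:
  assumes hom: "\<delta> \<in> hom (sym_group 4) (integer_mod_group 2)"
  shows "\<exists>e\<in>{0, 1}. \<forall>p. p permutes {1..4} \<longrightarrow> \<delta> p = e * perm_parity p"
proof -
  have \<delta>_range: "\<delta> p \<in> {0, 1}" if "p permutes {1..4}" for p
    using hom_in_carrier[OF hom] that by (simp add: sym_group_carrier carrier_integer_mod_group_2)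
  have \<delta>_comp: "\<delta> (p \<circ> q) = (\<delta> p + \<delta> q) mod 2" if "p permutes {1..4}" "q permutes {1..4}" for p q
    using hom_mult[OF hom] that by (simp add: sym_group_carrier sym_group_mult)
  have braid: "\<delta> p = \<delta> q"
    if "p permutes {1..4}" "q permutes {1..4}" "p \<circ> q \<circ> p = q \<circ> p \<circ> q" for p q
  proof -
    have "\<delta> (p \<circ> q \<circ> p) = \<delta> (q \<circ> p \<circ> q)" using that(3) by simp
    then show ?thesis
      using that(1,2) \<delta>_range[OF that(1)] \<delta>_range[OF that(2)] by (auto simp: \<delta>_comp permutes_compose)
  qed
  note s = generators_permute
  have s_eq: "\<delta> s2 = \<delta> s1" "\<delta> s3 = \<delta> s1"
    using braid[OF s(1) s(2)] braid[OF s(2) s(3)] by simp_all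
  have "\<delta> p = \<delta> s1 * perm_parity p" if "p permutes {1..4}" for p
    by (rule sym_group_4_hom_eqI[OF group_integer_mod_group hom scaled_parity_hom[OF \<delta>_range[OF s(1)]]])
      (use s_eq that perm_parity_generators in simp_all)
  then show ?thesis using \<delta>_range[OF s(1)] by blast
qed

lemma carrier_Sym4xC2: "carrier Sym4xC2 = {p. p permutes {1..4}} \<times> {0, 1}"
  by (auto simp: Sym4xC2_def sym_group_def carrier_integer_mod_group_2)

lemma mult_Sym4xC2: "x \<otimes>\<^bsub>Sym4xC2\<^esub> y = (fst x \<circ> fst y, (snd x + snd y) mod 2)"
  by (simp add: Sym4xC2_def mult_DirProd' sym_group_mult)

lemma one_Sym4xC2: "\<one>\<^bsub>Sym4xC2\<^esub> = (id, 0)"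
  by (simp add: Sym4xC2_def sym_group_one)

lemma group_Sym4xC2: "group Sym4xC2"
  unfolding Sym4xC2_def by (rule DirProd_group[OF sym_group_is_group group_integer_mod_group])

lemma inv_Sym4xC2: "x \<in> carrier Sym4xC2 \<Longrightarrow> inv\<^bsub>Sym4xC2\<^esub> x = (inv' (fst x), snd x)"
  unfolding Sym4xC2_def
  by (auto simp: inv_DirProd[OF sym_group_is_group group_integer_mod_group] sym_group_carrier
      carrier_integer_mod_group_2 sym_group_def[symmetric])

definition sym4xC2_aut :: "(nat \<Rightarrow> nat) \<Rightarrow> int \<Rightarrow> (nat \<Rightarrow> nat) \<times> int \<Rightarrow> (nat \<Rightarrow> nat) \<times> int" where
  "sym4xC2_aut g e =
     (\<lambda>x\<in>carrier Sym4xC2. (g \<circ> fst x \<circ> inv' g, (snd x + e * perm_parity (fst x)) mod 2))"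

lemma sym4xC2_aut_in_carrier:
  assumes "g permutes {1..4}" "x \<in> carrier Sym4xC2"
  shows "sym4xC2_aut g e x \<in> carrier Sym4xC2"
  using assms by (auto simp: sym4xC2_aut_def carrier_Sym4xC2 intro!: permutes_compose permutes_inv)

lemma sym4xC2_aut_comp:
  assumes g: "g permutes {1..4}" and h: "h permutes {1..4}" and "e \<in> {0, 1}" "f \<in> {0, 1}"
    and x: "x \<in> carrier Sym4xC2"
  shows "sym4xC2_aut g e (sym4xC2_aut h f x) = sym4xC2_aut (g \<circ> h) ((e + f) mod 2) x"
proof -
  obtain p c where x_eq: "x = (p, c)" and p: "p permutes {1..4}" and "c \<in> {0, 1}"
    using x by (auto simp: carrier_Sym4xC2)
  have "inv' (g \<circ> h) = inv' h \<circ> inv' g"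
    using o_inv_distrib[OF permutes_bij[OF g] permutes_bij[OF h]] .
  then show ?thesis
    using assms x_eq \<open>c \<in> {0, 1}\<close> sym4xC2_aut_in_carrier[OF h x] perm_parity_conj[OF h p]
      perm_parity_range[of p]
    by (auto simp: sym4xC2_aut_def o_assoc)
qed

lemma sym4xC2_aut_id: "x \<in> carrier Sym4xC2 \<Longrightarrow> sym4xC2_aut id 0 x = x"
  by (auto simp: sym4xC2_aut_def carrier_Sym4xC2 inv_id)

lemma sym4xC2_aut_in_auto:
  assumes g: "g permutes {1..4}" and e: "e \<in> {0, 1}"
  shows "sym4xC2_aut g e \<in> auto Sym4xC2"
proof -
  have ig: "inv' g permutes {1..4}" using permutes_inv[OF g] .
  have ee: "(e + e) mod 2 = 0" using e by auto
  have "bij_betw (sym4xC2_aut g e) (carrier Sym4xC2) (carrier Sym4xC2)"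
  proof (rule bij_betw_byWitness[where f' = "sym4xC2_aut (inv' g) e"])
    show "\<forall>x\<in>carrier Sym4xC2. sym4xC2_aut (inv' g) e (sym4xC2_aut g e x) = x"
      using sym4xC2_aut_comp[OF ig g e e] permutes_inv_o(2)[OF g] sym4xC2_aut_id ee by simp
    show "\<forall>x\<in>carrier Sym4xC2. sym4xC2_aut g e (sym4xC2_aut (inv' g) e x) = x"
      using sym4xC2_aut_comp[OF g ig e e] permutes_inv_o(1)[OF g] sym4xC2_aut_id ee by simp
  qed (use sym4xC2_aut_in_carrier g ig in auto)
  moreover have "sym4xC2_aut g e \<in> hom Sym4xC2 Sym4xC2"
  proof (rule homI)
    fix x y assume "x \<in> carrier Sym4xC2" "y \<in> carrier Sym4xC2"
    then obtain p c q d where x: "x = (p, c)" and y: "y = (q, d)"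
      and p: "p permutes {1..4}" and q: "q permutes {1..4}" and "c \<in> {0, 1}" "d \<in> {0, 1}"
      by (auto simp: carrier_Sym4xC2)
    have "g \<circ> (p \<circ> q) \<circ> inv' g = g \<circ> p \<circ> (inv' g \<circ> g) \<circ> q \<circ> inv' g"
      using permutes_inv_o(2)[OF g] by (simp add: o_assoc)
    then show "sym4xC2_aut g e (x \<otimes>\<^bsub>Sym4xC2\<^esub> y) =
        sym4xC2_aut g e x \<otimes>\<^bsub>Sym4xC2\<^esub> sym4xC2_aut g e y"
      using x y p q e \<open>c \<in> {0, 1}\<close> \<open>d \<in> {0, 1}\<close> perm_parity_comp[OF p q]
        perm_parity_range[of p] perm_parity_range[of q] permutes_compose[OF q p]
      by (auto simp: sym4xC2_aut_def mult_Sym4xC2 carrier_Sym4xC2 o_assoc)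
  qed (use sym4xC2_aut_in_carrier g in auto)
  ultimately show ?thesis by (simp add: auto_def Bij_def sym4xC2_aut_def)
qed

lemma sym4xC2_aut_inj:
  assumes g: "g permutes {1..4}" and h: "h permutes {1..4}" and e: "e \<in> {0, 1}" and f: "f \<in> {0, 1}"
    and eq: "sym4xC2_aut g e = sym4xC2_aut h f"
  shows "g = h \<and> e = f"
proof -
  have conj_eq: "g \<circ> s \<circ> inv' g = h \<circ> s \<circ> inv' h" and "e * perm_parity s = f * perm_parity s"
    if "s permutes {1..4}" for s
    using fun_cong[OF eq, of "(s, 0)"] that e f perm_parity_range[of s]
    by (auto simp: sym4xC2_aut_def carrier_Sym4xC2)
  then have "e = f" using generators_permute(1) perm_parity_generators(1) by fastforce
  have commute: "(inv' h \<circ> g) \<circ> s = s \<circ> (inv' h \<circ> g)" if "s permutes {1..4}" for s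
  proof -
    have "(inv' h \<circ> g) \<circ> s = inv' h \<circ> (g \<circ> s \<circ> inv' g) \<circ> g"
      using permutes_inv_o(2)[OF g] by (simp add: comp_assoc)
    also have "\<dots> = (inv' h \<circ> h) \<circ> s \<circ> (inv' h \<circ> g)"
      using conj_eq[OF that] by (simp add: o_assoc)
    finally show ?thesis using permutes_inv_o(2)[OF h] by simp
  qed
  have "inv' h \<circ> g = id"
    using commutes_with_s1_s2_imp_id[OF permutes_compose[OF g permutes_inv[OF h]]]
      commute generators_permute by simp
  then have "h \<circ> (inv' h \<circ> g) = h" by simp
  then have "g = h" using permutes_inv_o(1)[OF h] by (simp add: o_assoc)
  with \<open>e = f\<close> show ?thesis by simp
qed

lemma auto_Sym4xC2_fixes_central:
  assumes "\<alpha> \<in> auto Sym4xC2"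
  shows "\<alpha> (id, 1) = (id, 1)"
proof -
  let ?G = Sym4xC2 and ?z = "(id :: nat \<Rightarrow> nat, 1 :: int)"
  have hom: "\<alpha> \<in> hom ?G ?G" and inj: "inj_on \<alpha> (carrier ?G)" and surj: "\<alpha> ` carrier ?G = carrier ?G"
    using assms by (auto simp: auto_def Bij_def bij_betw_def)
  interpret \<alpha>: group_hom ?G ?G \<alpha>
    using hom group_Sym4xC2 by (simp add: group_hom_def group_hom_axioms_def)
  have z: "?z \<in> carrier ?G" by (simp add: carrier_Sym4xC2 permutes_id)
  have central: "\<alpha> ?z \<otimes>\<^bsub>?G\<^esub> \<alpha> x = \<alpha> x \<otimes>\<^bsub>?G\<^esub> \<alpha> ?z" if "x \<in> carrier ?G" for x
  proof -
    have "?z \<otimes>\<^bsub>?G\<^esub> x = x \<otimes>\<^bsub>?G\<^esub> ?z" by (simp add: mult_Sym4xC2 add.commute)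
    then show ?thesis using hom_mult[OF hom z that] hom_mult[OF hom that z] by simp
  qed
  obtain \<zeta> w where \<alpha>z: "\<alpha> ?z = (\<zeta>, w)" and \<zeta>: "\<zeta> permutes {1..4}" and w: "w \<in> {0, 1}"
    using hom_in_carrier[OF hom z] by (auto simp: carrier_Sym4xC2)
  have "\<zeta> \<circ> s = s \<circ> \<zeta>" if "s permutes {1..4}" for s
  proof -
    have "(s, 0) \<in> \<alpha> ` carrier ?G" using surj that by (simp add: carrier_Sym4xC2)
    then obtain x where "x \<in> carrier ?G" "\<alpha> x = (s, 0)" by auto
    then have "(\<zeta>, w) \<otimes>\<^bsub>?G\<^esub> (s, 0) = (s, 0) \<otimes>\<^bsub>?G\<^esub> (\<zeta>, w)" using central \<alpha>z by metis
    then show ?thesis by (simp add: mult_Sym4xC2)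
  qed
  then have "\<zeta> = id" using commutes_with_s1_s2_imp_id[OF \<zeta>] generators_permute by simp
  moreover have "w \<noteq> 0"
  proof
    assume "w = 0"
    then have "\<alpha> ?z = \<alpha> \<one>\<^bsub>?G\<^esub>" using \<alpha>z \<open>\<zeta> = id\<close> \<alpha>.hom_one by (simp add: one_Sym4xC2)
    then have "?z = \<one>\<^bsub>?G\<^esub>" by (rule inj_onD[OF inj _ z]) simp
    then show False by (simp add: one_Sym4xC2)
  qed
  ultimately show ?thesis using \<alpha>z w by simp
qed

lemma auto_Sym4xC2_decomposition:
  assumes "\<alpha> \<in> auto Sym4xC2"
  obtains \<beta> \<delta> where "\<beta> \<in> hom (sym_group 4) (sym_group 4)" "inj_on \<beta> {p. p permutes {1..4}}"
    and "\<delta> \<in> hom (sym_group 4) (integer_mod_group 2)"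
    and "\<And>p c. p permutes {1..4} \<Longrightarrow> c \<in> {0, 1} \<Longrightarrow> \<alpha> (p, c) = (\<beta> p, (\<delta> p + c) mod 2)"
proof -
  let ?G = Sym4xC2
  have hom: "\<alpha> \<in> hom ?G ?G" and inj: "inj_on \<alpha> (carrier ?G)"
    using assms by (auto simp: auto_def Bij_def bij_betw_def)
  define \<beta> where "\<beta> p = fst (\<alpha> (p, 0))" for p
  define \<delta> where "\<delta> p = snd (\<alpha> (p, 0))" for p
  have in_G: "(p, c) \<in> carrier ?G" if "p permutes {1..4}" "c \<in> {0, 1}" for p c
    using that by (simp add: carrier_Sym4xC2)
  have \<alpha>_p0: "\<alpha> (p, 0) = (\<beta> p, \<delta> p)" for p by (simp add: \<beta>_def \<delta>_def)
  have \<alpha>_mult: "\<alpha> (p \<circ> q, (c + d) mod 2) = \<alpha> (p, c) \<otimes>\<^bsub>?G\<^esub> \<alpha> (q, d)"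
    if "p permutes {1..4}" "q permutes {1..4}" "c \<in> {0, 1}" "d \<in> {0, 1}" for p q c d
    using hom_mult[OF hom in_G[OF that(1,3)] in_G[OF that(2,4)]] by (simp add: mult_Sym4xC2)
  have \<alpha>_pc: "\<alpha> (p, c) = (\<beta> p, (\<delta> p + c) mod 2)" if "p permutes {1..4}" "c \<in> {0, 1}" for p c
    using \<alpha>_mult[OF that(1) permutes_id _ that(2), of 0] auto_Sym4xC2_fixes_central[OF assms] \<alpha>_p0
      that(2) by (auto simp: mult_Sym4xC2)
  have \<beta>\<delta>_range: "\<beta> p permutes {1..4}" "\<delta> p \<in> {0, 1}" if "p permutes {1..4}" for p
    using hom_in_carrier[OF hom in_G[OF that, of 0]] \<alpha>_p0[of p] by (auto simp: carrier_Sym4xC2)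
  have \<beta>\<delta>_comp: "\<beta> (p \<circ> q) = \<beta> p \<circ> \<beta> q" "\<delta> (p \<circ> q) = (\<delta> p + \<delta> q) mod 2"
    if "p permutes {1..4}" "q permutes {1..4}" for p q
    using \<alpha>_mult[OF that, of 0 0] by (simp_all add: \<alpha>_p0 mult_Sym4xC2)
  have "\<beta> \<in> hom (sym_group 4) (sym_group 4)" and "\<delta> \<in> hom (sym_group 4) (integer_mod_group 2)"
    using \<beta>\<delta>_range \<beta>\<delta>_comp
    by (auto intro!: homI simp: sym_group_carrier sym_group_mult carrier_integer_mod_group_2
        simp del: insert_iff)
  moreover have "inj_on \<beta> {p. p permutes {1..4}}"
  proof (rule inj_onI)
    fix p q assume p: "p \<in> {p. p permutes {1..4}}" and q: "q \<in> {p. p permutes {1..4}}"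
      and "\<beta> p = \<beta> q"
    moreover define c where "c = (\<delta> p + \<delta> q) mod 2"
    moreover have "c \<in> {0, 1}" "(\<delta> q + c) mod 2 = \<delta> p"
      using \<beta>\<delta>_range(2)[of p] \<beta>\<delta>_range(2)[of q] p q by (auto simp: c_def)
    ultimately have "\<alpha> (q, c) = \<alpha> (p, 0)" using \<alpha>_pc \<alpha>_p0 by simp
    then have "(q, c) = (p, 0)" by (rule inj_onD[OF inj]) (use p q \<open>c \<in> {0, 1}\<close> in_G in auto)
    then show "p = q" by simp
  qed
  ultimately show ?thesis using that \<alpha>_pc by blast
qed

lemma auto_Sym4xC2_eq_sym4xC2_aut:
  assumes "\<alpha> \<in> auto Sym4xC2"
  obtains g e where "g permutes {1..4}" "e \<in> {0, 1}" "\<alpha> = sym4xC2_aut g e"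
proof -
  obtain \<beta> \<delta> where \<beta>: "\<beta> \<in> hom (sym_group 4) (sym_group 4)" "inj_on \<beta> {p. p permutes {1..4}}"
    and \<delta>: "\<delta> \<in> hom (sym_group 4) (integer_mod_group 2)"
    and \<alpha>_pc: "\<And>p c. p permutes {1..4} \<Longrightarrow> c \<in> {0, 1} \<Longrightarrow> \<alpha> (p, c) = (\<beta> p, (\<delta> p + c) mod 2)"
    by (rule auto_Sym4xC2_decomposition[OF assms]) metis
  obtain g where g: "g permutes {1..4}"
    and \<beta>_conj: "\<And>p. p permutes {1..4} \<Longrightarrow> \<beta> p = g \<circ> p \<circ> inv' g"
    using sym_group_4_inj_endo_is_conj[OF \<beta>] by blast
  obtain e where e: "e \<in> {0, 1}" and \<delta>_sign: "\<And>p. p permutes {1..4} \<Longrightarrow> \<delta> p = e * perm_parity p"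
    using sym_group_4_hom_C2[OF \<delta>] by blast
  have "\<alpha> = sym4xC2_aut g e"
  proof
    fix x show "\<alpha> x = sym4xC2_aut g e x"
    proof (cases "x \<in> carrier Sym4xC2")
      case True
      then obtain p c where "x = (p, c)" "p permutes {1..4}" "c \<in> {0, 1}"
        by (auto simp: carrier_Sym4xC2)
      then show ?thesis
        using True \<alpha>_pc \<beta>_conj \<delta>_sign by (simp add: sym4xC2_aut_def add.commute)
    next
      case False
      have "\<alpha> \<in> extensional (carrier Sym4xC2)" using assms by (simp add: auto_def Bij_def)
      with False show ?thesis by (simp add: extensional_arb[of \<alpha>] sym4xC2_aut_def)
    qed
  qed
  with g e that show ?thesis by blast
qed

lemma sym4xC2_aut_hom: "case_prod sym4xC2_aut \<in> hom Sym4xC2 (AutoGroup Sym4xC2)"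
proof (rule homI)
  fix x y assume "x \<in> carrier Sym4xC2" "y \<in> carrier Sym4xC2"
  then obtain g e h f where x: "x = (g, e)" and y: "y = (h, f)" and g: "g permutes {1..4}"
    and h: "h permutes {1..4}" and e: "e \<in> {0, 1}" and f: "f \<in> {0, 1}"
    by (auto simp: carrier_Sym4xC2)
  have "compose (carrier Sym4xC2) (sym4xC2_aut g e) (sym4xC2_aut h f) =
      sym4xC2_aut (g \<circ> h) ((e + f) mod 2)"
  proof
    fix z show "compose (carrier Sym4xC2) (sym4xC2_aut g e) (sym4xC2_aut h f) z =
        sym4xC2_aut (g \<circ> h) ((e + f) mod 2) z"
      using sym4xC2_aut_comp[OF g h e f, of z]
      by (cases "z \<in> carrier Sym4xC2") (simp_all add: compose_def sym4xC2_aut_def[of "g \<circ> h"])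
  qed
  then show "case_prod sym4xC2_aut (x \<otimes>\<^bsub>Sym4xC2\<^esub> y) =
      case_prod sym4xC2_aut x \<otimes>\<^bsub>AutoGroup Sym4xC2\<^esub> case_prod sym4xC2_aut y"
    using x y sym4xC2_aut_in_auto[OF g e] sym4xC2_aut_in_auto[OF h f]
    by (simp add: mult_Sym4xC2 AutoGroup_def BijGroup_def auto_def)
qed (auto simp: carrier_Sym4xC2 AutoGroup_def intro: sym4xC2_aut_in_auto)

lemma sym4xC2_aut_iso: "case_prod sym4xC2_aut \<in> iso Sym4xC2 (AutoGroup Sym4xC2)"
proof -
  have "inj_on (case_prod sym4xC2_aut) (carrier Sym4xC2)"
  proof (rule inj_onI)
    fix x y assume "x \<in> carrier Sym4xC2" "y \<in> carrier Sym4xC2"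
      and eq: "case_prod sym4xC2_aut x = case_prod sym4xC2_aut y"
    then obtain g e h f where "x = (g, e)" "y = (h, f)" "g permutes {1..4}" "h permutes {1..4}"
      "e \<in> {0, 1}" "f \<in> {0, 1}"
      by (auto simp: carrier_Sym4xC2)
    with sym4xC2_aut_inj[of g h e f] eq show "x = y" by simp
  qed
  moreover have "case_prod sym4xC2_aut ` carrier Sym4xC2 = auto Sym4xC2"
  proof
    show "case_prod sym4xC2_aut ` carrier Sym4xC2 \<subseteq> auto Sym4xC2"
      by (auto simp: carrier_Sym4xC2 intro: sym4xC2_aut_in_auto)
    show "auto Sym4xC2 \<subseteq> case_prod sym4xC2_aut ` carrier Sym4xC2"
    proof
      fix \<alpha> assume "\<alpha> \<in> auto Sym4xC2"
      then obtain g e where "g permutes {1..4}" "e \<in> {0, 1}" "\<alpha> = sym4xC2_aut g e"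
        by (rule auto_Sym4xC2_eq_sym4xC2_aut)
      then show "\<alpha> \<in> case_prod sym4xC2_aut ` carrier Sym4xC2"
        by (intro image_eqI[where x = "(g, e)"]) (simp_all add: carrier_Sym4xC2)
    qed
  qed
  ultimately show ?thesis using sym4xC2_aut_hom by (simp add: iso_iff AutoGroup_def)
qed

lemma inner_autos_Sym4xC2:
  "inner_autos Sym4xC2 = case_prod sym4xC2_aut ` ({p. p permutes {1..4}} \<times> {0})"
proof -
  have conj: "(\<lambda>x\<in>carrier Sym4xC2. y \<otimes>\<^bsub>Sym4xC2\<^esub> x \<otimes>\<^bsub>Sym4xC2\<^esub> inv\<^bsub>Sym4xC2\<^esub> y) =
      sym4xC2_aut (fst y) 0" if "y \<in> carrier Sym4xC2" for y
    using that inv_Sym4xC2[OF that]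
    by (auto simp: sym4xC2_aut_def mult_Sym4xC2 carrier_Sym4xC2 o_assoc fun_eq_iff)
  show ?thesis
  proof
    show "inner_autos Sym4xC2 \<subseteq> case_prod sym4xC2_aut ` ({p. p permutes {1..4}} \<times> {0})"
    proof
      fix a assume "a \<in> inner_autos Sym4xC2"
      then obtain y where y: "y \<in> carrier Sym4xC2"
        and "a = (\<lambda>x\<in>carrier Sym4xC2. y \<otimes>\<^bsub>Sym4xC2\<^esub> x \<otimes>\<^bsub>Sym4xC2\<^esub> inv\<^bsub>Sym4xC2\<^esub> y)"
        by (auto simp: inner_autos_def)
      then have "a = case_prod sym4xC2_aut (fst y, 0)" using conj by simp
      moreover have "(fst y, 0) \<in> {p. p permutes {1..4}} \<times> {0 :: int}"
        using y by (auto simp: carrier_Sym4xC2)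
      ultimately show "a \<in> case_prod sym4xC2_aut ` ({p. p permutes {1..4}} \<times> {0})" by blast
    qed
    show "case_prod sym4xC2_aut ` ({p. p permutes {1..4}} \<times> {0}) \<subseteq> inner_autos Sym4xC2"
    proof clarify
      fix g :: "nat \<Rightarrow> nat" assume "g permutes {1..4}"
      then have "(g, 0) \<in> carrier Sym4xC2" by (simp add: carrier_Sym4xC2)
      with conj[OF this] show "sym4xC2_aut g 0 \<in> inner_autos Sym4xC2"
        unfolding inner_autos_def by (intro CollectI exI[of _ "(g, 0)"]) simp
    qed
  qed
qed

section \<open>The cube and its symmetries\<close>

lemma Collect_less_3_eq:
  "{i::nat. i < 3 \<and> P i} = (if P 0 then {0} else {}) \<union> (if P 1 then {1} else {}) \<union> (if P 2 then {2} else {})"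
proof (rule Set.set_eqI)
  fix x :: nat
  have "x < 3 \<longleftrightarrow> x = 0 \<or> x = 1 \<or> x = 2" by auto
  then show "x \<in> {i. i < 3 \<and> P i} \<longleftrightarrow>
      x \<in> (if P 0 then {0} else {}) \<union> (if P 1 then {1} else {}) \<union> (if P 2 then {2} else {})"
    by auto
qed

definition cube_adj :: "cvert \<Rightarrow> cvert \<Rightarrow> bool" where
  "cube_adj u v \<longleftrightarrow> (case u of (a, b, c) \<Rightarrow> case v of (a', b', c') \<Rightarrow>
     (a \<noteq> a' \<and> b = b' \<and> c = c') \<or> (a = a' \<and> b \<noteq> b' \<and> c = c') \<or> (a = a' \<and> b = b' \<and> c \<noteq> c'))"

lemma cube_edges_eq: "cube_edges = {{u, v} | u v. cube_adj u v}"
proof -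
  have "card {i. i < 3 \<and> coord u i \<noteq> coord v i} = 1 \<longleftrightarrow> cube_adj u v" for u v
    by (cases u; cases v) (auto simp: Collect_less_3_eq cube_adj_def)
  then show ?thesis unfolding cube_edges_def by simp
qed

lemma even_vertex_iff: "even_vertex (a, b, c) \<longleftrightarrow> (a \<longleftrightarrow> b \<noteq> c)"
  by (cases a; cases b; cases c) (simp_all add: even_vertex_def Collect_less_3_eq)

definition cube_face :: "nat \<Rightarrow> bool \<Rightarrow> cvert set" where
  "cube_face i b = {v. coord v i = b}"

lemma cube_faces_eq: "cube_faces = {cube_face i b | i b. i < 3}"
  unfolding cube_faces_def cube_face_def ..

lemma cube_face_explicit:
  "cube_face 0 b = {(b, False, False), (b, False, True), (b, True, False), (b, True, True)}"
  "cube_face 1 b = {(False, b, False), (False, b, True), (True, b, False), (True, b, True)}"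
  "cube_face 2 b = {(False, False, b), (False, True, b), (True, False, b), (True, True, b)}"
  unfolding cube_face_def by (auto; case_tac b; auto)+

lemma less_3_cases: "(i::nat) < 3 \<Longrightarrow> i = 0 \<or> i = 1 \<or> i = 2"
  by auto

lemma card_cube_face: "i < 3 \<Longrightarrow> card (cube_face i b) = 4"
  by (drule less_3_cases) (auto simp: cube_face_explicit)

lemma cube_adj_neq: "cube_adj u v \<Longrightarrow> u \<noteq> v"
  by (cases u) (auto simp: cube_adj_def)

lemma cube_X_cases [consumes 1, case_names vertex edge face]:
  assumes "x \<in> cube_X"
  obtains v where "x = {v}"
    | u v where "x = {u, v}" "cube_adj u v"
    | i b where "x = cube_face i b" "i < 3"
  using assms unfolding cube_X_def cube_vertices_def cube_edges_eq cube_faces_eq by blast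

lemma singleton_in_cube_X: "{v} \<in> cube_X"
  unfolding cube_X_def cube_vertices_def by blast

lemma edge_in_cube_X: "cube_adj u v \<Longrightarrow> {u, v} \<in> cube_X"
  unfolding cube_X_def cube_edges_eq by blast

lemma face_in_cube_X: "i < 3 \<Longrightarrow> cube_face i b \<in> cube_X"
  unfolding cube_X_def cube_faces_eq by blast

lemma cube_vertices_iff: "x \<in> cube_vertices \<longleftrightarrow> (\<exists>v. x = {v})"
  by (simp add: cube_vertices_def)

lemma card_cube_edge: "cube_adj u v \<Longrightarrow> card {u, v} = 2"
  using cube_adj_neq by auto

lemma card_cube_X: "x \<in> cube_X \<Longrightarrow> card x \<in> {1, 2, 4}"
  by (erule cube_X_cases) (simp_all add: card_cube_face card_cube_edge)

lemma finite_cube_X: "x \<in> cube_X \<Longrightarrow> finite x"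
  using card_cube_X card.infinite by force

lemma cube_type_singleton: "cube_type {v} = (if even_vertex v then 1 else 2)"
proof -
  have "{v} \<in> cube_vertices" unfolding cube_vertices_iff by blast
  moreover have "(THE w. {v} = {w}) = v" by auto
  ultimately show ?thesis by (simp add: cube_type_def)
qed

lemma cube_type_edge:
  assumes "cube_adj u v"
  shows "cube_type {u, v} = 3"
proof -
  have "{u, v} \<notin> cube_vertices"
    using cube_adj_neq[OF assms] by (auto simp: cube_vertices_iff doubleton_eq_iff)
  moreover have "{u, v} \<in> cube_edges" unfolding cube_edges_eq using assms by blast
  ultimately show ?thesis by (simp add: cube_type_def)
qed

lemma cube_type_face:
  assumes "i < 3"
  shows "cube_type (cube_face i b) = 4"
proof -
  have "cube_face i b \<notin> cube_vertices"
  proof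
    assume "cube_face i b \<in> cube_vertices"
    then obtain v where "cube_face i b = {v}" unfolding cube_vertices_iff by blast
    with card_cube_face[OF assms, of b] show False by simp
  qed
  moreover have "cube_face i b \<notin> cube_edges"
  proof
    assume "cube_face i b \<in> cube_edges"
    then obtain u v where "cube_face i b = {u, v}" "cube_adj u v" unfolding cube_edges_eq by blast
    with card_cube_face[OF assms, of b] card_cube_edge show False by simp
  qed
  ultimately show ?thesis by (simp add: cube_type_def)
qed

lemma cube_type_by_card:
  assumes "x \<in> cube_X"
  shows "cube_type x =
    (if card x = 1 then (if even_vertex (the_elem x) then 1 else 2) else if card x = 2 then 3 else 4)"
  using assms
  by (cases rule: cube_X_cases)
     (simp_all add: cube_type_singleton cube_type_edge cube_type_face card_cube_face card_cube_edge)

lemma cube_type_range: "cube_type x \<in> {1, 2, 3, 4}"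
  by (simp add: cube_type_def)

lemma cube_type_vertex_iff: "cube_type x \<in> {1, 2} \<longleftrightarrow> x \<in> cube_vertices"
  by (simp add: cube_type_def)

lemma empty_notin_cube_X: "{} \<notin> cube_X"
proof
  assume "{} \<in> cube_X"
  then show False
  proof (cases rule: cube_X_cases)
    case (face i b)
    then have "(b, b, b) \<in> cube_face i b" using less_3_cases[of i] by (auto simp: cube_face_def)
    then show False using face by simp
  qed auto
qed

lemma cube_inc_sym: "cube_inc x y \<longleftrightarrow> cube_inc y x"
  by (auto simp: cube_inc_def)

lemma cube_incidence_system: "incidence_system cube_X cube_inc cube_type cube_I"
  unfolding incidence_system_def
proof (intro conjI ballI impI)
  show "finite cube_I" by (simp add: cube_I_def)
  have adj: "cube_adj (False, False, False) (True, False, False)" by (simp add: cube_adj_def)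
  have "{cube_type {(False, False, False)}, cube_type {(True, False, False)},
      cube_type {(False, False, False), (True, False, False)}, cube_type (cube_face 0 False)}
      \<subseteq> cube_type ` cube_X"
    using singleton_in_cube_X edge_in_cube_X[OF adj] face_in_cube_X[of 0 False]
    by (simp add: image_subset_iff)
  then have "{1, 2, 3, 4} \<subseteq> cube_type ` cube_X"
    by (simp add: cube_type_singleton even_vertex_iff cube_type_edge[OF adj] cube_type_face)
  then show "cube_type ` cube_X = cube_I"
    using cube_type_range by (auto simp: cube_I_def)
next
  fix x y assume x: "x \<in> cube_X" and y: "y \<in> cube_X"
  show "cube_inc x y = cube_inc y x" by (rule cube_inc_sym)
  assume "cube_type x = cube_type y"
  then have "card x = card y"
    using card_cube_X[OF x] card_cube_X[OF y] cube_type_by_card[OF x] cube_type_by_card[OF y]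
    by (auto split: if_splits)
  then show "\<not> cube_inc x y"
    using psubset_card_mono[OF finite_cube_X[OF y], of x] psubset_card_mono[OF finite_cube_X[OF x], of y]
    unfolding cube_inc_def by linarith
qed

text \<open>The even vertices (the tetrahedron \<open>P\<^sub>1\<close>) are numbered \<open>1, \<dots>, 4\<close>; every odd vertex is
  the antipode of exactly one of them.\<close>

definition tet_vertex :: "nat \<Rightarrow> cvert" where
  "tet_vertex i =
     (if i = 1 then (False, False, False) else if i = 2 then (True, True, False)
      else if i = 3 then (True, False, True) else (False, True, True))"

definition antipode :: "cvert \<Rightarrow> cvert" where
  "antipode v = (case v of (a, b, c) \<Rightarrow> (\<not> a, \<not> b, \<not> c))"

lemma antipode_simp [simp]: "antipode (a, b, c) = (\<not> a, \<not> b, \<not> c)"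
  by (simp add: antipode_def)

lemma antipode_antipode [simp]: "antipode (antipode v) = v"
  by (cases v) simp

lemma antipode_eq_iff: "antipode u = antipode v \<longleftrightarrow> u = v"
  by (metis antipode_antipode)

lemma tet_vertex_simps [simp]:
  "tet_vertex 1 = (False, False, False)" "tet_vertex 2 = (True, True, False)"
  "tet_vertex 3 = (True, False, True)" "tet_vertex 4 = (False, True, True)"
  by (simp_all add: tet_vertex_def)

lemma cube_vertex_cases:
  obtains (even) i where "i \<in> {1..4}" "v = tet_vertex i"
    | (odd) i where "i \<in> {1..4}" "v = antipode (tet_vertex i)"
proof -
  have four: "{1..4::nat} = {1, 2, 3, 4}" by auto
  obtain a b c where "v = (a, b, c)" by (cases v)
  then have "v \<in> tet_vertex ` {1..4} \<union> antipode ` tet_vertex ` {1..4}"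
    unfolding four by (cases a; cases b; cases c) simp_all
  then show ?thesis using that by blast
qed

lemma atLeastAtMost_4_cases: "i \<in> {1..4::nat} \<Longrightarrow> i = 1 \<or> i = 2 \<or> i = 3 \<or> i = 4"
  by auto

lemma tet_vertex_inj: "i \<in> {1..4} \<Longrightarrow> j \<in> {1..4} \<Longrightarrow> tet_vertex i = tet_vertex j \<Longrightarrow> i = j"
  by (drule atLeastAtMost_4_cases)+ auto

lemma even_tet_vertex: "i \<in> {1..4} \<Longrightarrow> even_vertex (tet_vertex i)"
  by (drule atLeastAtMost_4_cases) (auto simp: even_vertex_iff)

lemma even_vertex_antipode: "even_vertex (antipode v) \<longleftrightarrow> \<not> even_vertex v"
  by (cases v) (auto simp: even_vertex_iff)

lemma even_vertex_imp_tet_vertex: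
  assumes "even_vertex v"
  obtains i where "i \<in> {1..4}" "v = tet_vertex i"
  using assms by (cases v rule: cube_vertex_cases) (auto simp: even_vertex_antipode even_tet_vertex)

definition vertex_perm :: "(nat \<Rightarrow> nat) \<Rightarrow> cvert \<Rightarrow> cvert" where
  "vertex_perm g v =
     (if v = tet_vertex 1 then tet_vertex (g 1) else if v = tet_vertex 2 then tet_vertex (g 2)
      else if v = tet_vertex 3 then tet_vertex (g 3) else if v = tet_vertex 4 then tet_vertex (g 4)
      else if v = antipode (tet_vertex 1) then antipode (tet_vertex (g 1))
      else if v = antipode (tet_vertex 2) then antipode (tet_vertex (g 2))
      else if v = antipode (tet_vertex 3) then antipode (tet_vertex (g 3))
      else antipode (tet_vertex (g 4)))"

lemma vertex_perm_tet_vertex: "i \<in> {1..4} \<Longrightarrow> vertex_perm g (tet_vertex i) = tet_vertex (g i)"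
  by (drule atLeastAtMost_4_cases) (auto simp: vertex_perm_def)

lemma vertex_perm_antipode_tet_vertex:
  "i \<in> {1..4} \<Longrightarrow> vertex_perm g (antipode (tet_vertex i)) = antipode (tet_vertex (g i))"
  by (drule atLeastAtMost_4_cases) (auto simp: vertex_perm_def)

lemma vertex_perm_comp:
  assumes h: "h permutes {1..4}"
  shows "vertex_perm (g \<circ> h) v = vertex_perm g (vertex_perm h v)"
proof -
  have "i \<in> {1..4} \<Longrightarrow> h i \<in> {1..4}" for i by (simp only: permutes_in_image[OF h])
  then show ?thesis
    by (cases v rule: cube_vertex_cases)
       (simp_all add: vertex_perm_tet_vertex vertex_perm_antipode_tet_vertex del: atLeastAtMost_iff)
qed

lemma vertex_perm_antipode: "vertex_perm g (antipode v) = antipode (vertex_perm g v)"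
  by (cases v rule: cube_vertex_cases) (simp_all add: vertex_perm_tet_vertex vertex_perm_antipode_tet_vertex)

lemma vertex_perm_id: "vertex_perm id = id"
proof
  fix v show "vertex_perm id v = id v"
    by (cases v rule: cube_vertex_cases) (simp_all add: vertex_perm_tet_vertex vertex_perm_antipode_tet_vertex)
qed

lemma even_vertex_perm:
  assumes g: "g permutes {1..4}"
  shows "even_vertex (vertex_perm g v) \<longleftrightarrow> even_vertex v"
proof -
  have "i \<in> {1..4} \<Longrightarrow> g i \<in> {1..4}" for i by (simp only: permutes_in_image[OF g])
  then show ?thesis
    by (cases v rule: cube_vertex_cases)
       (simp_all add: vertex_perm_tet_vertex vertex_perm_antipode_tet_vertex even_tet_vertex
        even_vertex_antipode del: atLeastAtMost_iff)
qed

definition preserves_cube :: "(cvert \<Rightarrow> cvert) \<Rightarrow> bool" where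
  "preserves_cube \<pi> \<longleftrightarrow> (\<forall>x\<in>cube_X. \<pi> ` x \<in> cube_X)"

lemma preserves_cube_comp: "preserves_cube \<pi> \<Longrightarrow> preserves_cube \<rho> \<Longrightarrow> preserves_cube (\<pi> \<circ> \<rho>)"
  unfolding preserves_cube_def by (metis image_comp)

lemma preserves_cube_signed_coord_perm:
  assumes inv: "\<And>v. \<pi> (\<pi> v) = v"
    and adj: "\<And>u v. cube_adj u v \<Longrightarrow> cube_adj (\<pi> u) (\<pi> v)"
    and coord: "\<And>v i. i < 3 \<Longrightarrow> coord (\<pi> v) i = (coord v (p i) \<noteq> m i)"
    and p: "\<And>i. i < 3 \<Longrightarrow> p i < 3"
  shows "preserves_cube \<pi>"
  unfolding preserves_cube_def
proof
  fix x assume "x \<in> cube_X"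
  then show "\<pi> ` x \<in> cube_X"
  proof (cases rule: cube_X_cases)
    case (vertex v) then show ?thesis by (simp add: singleton_in_cube_X)
  next
    case (edge u v) then show ?thesis by (simp add: edge_in_cube_X adj)
  next
    case (face i b)
    have "\<pi> ` cube_face i b = cube_face (p i) (b \<noteq> m i)"
    proof (rule Set.set_eqI)
      fix w
      have "w \<in> \<pi> ` cube_face i b \<longleftrightarrow> \<pi> w \<in> cube_face i b"
        by (metis image_iff inv)
      also have "\<dots> \<longleftrightarrow> w \<in> cube_face (p i) (b \<noteq> m i)"
        using coord[OF face(2), of w] by (auto simp: cube_face_def)
      finally show "w \<in> \<pi> ` cube_face i b \<longleftrightarrow> w \<in> cube_face (p i) (b \<noteq> m i)" .
    qed
    then show ?thesis using face p face_in_cube_X by simp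
  qed
qed

lemma vertex_perm_explicit:
  "vertex_perm g (False, False, False) = tet_vertex (g 1)"
  "vertex_perm g (True, True, False) = tet_vertex (g 2)"
  "vertex_perm g (True, False, True) = tet_vertex (g 3)"
  "vertex_perm g (False, True, True) = tet_vertex (g 4)"
  "vertex_perm g (True, True, True) = antipode (tet_vertex (g 1))"
  "vertex_perm g (False, False, True) = antipode (tet_vertex (g 2))"
  "vertex_perm g (False, True, False) = antipode (tet_vertex (g 3))"
  "vertex_perm g (True, False, False) = antipode (tet_vertex (g 4))"
  by (simp_all add: vertex_perm_def)

lemma preserves_cube_generators:
  "preserves_cube (vertex_perm s1)" "preserves_cube (vertex_perm s2)" "preserves_cube (vertex_perm s3)"
proof -
  have "vertex_perm s1 = (\<lambda>(x, y, z). (\<not> y, \<not> x, z))"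
    "vertex_perm s2 = (\<lambda>(x, y, z). (x, z, y))"
    "vertex_perm s3 = (\<lambda>(x, y, z). (y, x, z))"
    by (simp_all add: fun_eq_iff all_bool_eq vertex_perm_explicit)
  moreover have "preserves_cube (\<lambda>(x, y, z). (\<not> y, \<not> x, z))"
    by (rule preserves_cube_signed_coord_perm[where p = "Transposition.transpose 0 1" and m = "\<lambda>i. i \<noteq> 2"])
       (auto simp: cube_adj_def dest!: less_3_cases)
  moreover have "preserves_cube (\<lambda>(x, y, z). (x, z, y))"
    by (rule preserves_cube_signed_coord_perm[where p = "Transposition.transpose 1 2" and m = "\<lambda>i. False"])
       (auto simp: cube_adj_def dest!: less_3_cases)
  moreover have "preserves_cube (\<lambda>(x, y, z). (y, x, z))"
    by (rule preserves_cube_signed_coord_perm[where p = "Transposition.transpose 0 1" and m = "\<lambda>i. False"])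
       (auto simp: cube_adj_def dest!: less_3_cases)
  ultimately show "preserves_cube (vertex_perm s1)" "preserves_cube (vertex_perm s2)"
    "preserves_cube (vertex_perm s3)"
    by simp_all
qed

lemma preserves_cube_antipode: "preserves_cube antipode"
  by (rule preserves_cube_signed_coord_perm[where p = id and m = "\<lambda>i. True"])
     (auto simp: cube_adj_def dest!: less_3_cases)

lemma preserves_cube_vertex_perm:
  assumes "g permutes {1..4}"
  shows "preserves_cube (vertex_perm g)"
  using assms
proof (induction rule: permutes_4_induct)
  case id
  show ?case by (simp only: vertex_perm_id preserves_cube_def image_id) simp
next
  case (gen s q)
  have "preserves_cube (vertex_perm s)" using gen(1) preserves_cube_generators by blast
  moreover have "vertex_perm (s \<circ> q) = vertex_perm s \<circ> vertex_perm q"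
    using vertex_perm_comp[OF gen(2)] by (simp add: fun_eq_iff)
  ultimately show ?case using gen(3) preserves_cube_comp by metis
qed

definition cube_vertex_map :: "(nat \<Rightarrow> nat) \<Rightarrow> int \<Rightarrow> cvert \<Rightarrow> cvert" where
  "cube_vertex_map g e = (if e = 0 then vertex_perm g else antipode \<circ> vertex_perm g)"

definition cube_cor :: "(nat \<Rightarrow> nat) \<Rightarrow> int \<Rightarrow> cvert set \<Rightarrow> cvert set" where
  "cube_cor g e = (\<lambda>x\<in>cube_X. cube_vertex_map g e ` x)"

lemma preserves_cube_vertex_map: "g permutes {1..4} \<Longrightarrow> preserves_cube (cube_vertex_map g e)"
  by (simp add: cube_vertex_map_def preserves_cube_vertex_perm preserves_cube_comp preserves_cube_antipode)

lemma cube_vertex_map_comp: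
  assumes "h permutes {1..4}" "e \<in> {0, 1}" "f \<in> {0, 1}"
  shows "cube_vertex_map g e (cube_vertex_map h f v) = cube_vertex_map (g \<circ> h) ((e + f) mod 2) v"
  using assms by (auto simp: cube_vertex_map_def vertex_perm_comp vertex_perm_antipode)

lemma cube_vertex_map_inverse:
  assumes g: "g permutes {1..4}" and e: "e \<in> {0, 1}"
  shows "cube_vertex_map (inv' g) e (cube_vertex_map g e v) = v"
proof -
  have "cube_vertex_map (inv' g) e (cube_vertex_map g e v) = cube_vertex_map id 0 v"
    using cube_vertex_map_comp[OF g e e] permutes_inv_o(2)[OF g] e by auto
  then show ?thesis by (simp add: cube_vertex_map_def vertex_perm_id)
qed

lemma inj_cube_vertex_map: "g permutes {1..4} \<Longrightarrow> e \<in> {0, 1} \<Longrightarrow> inj (cube_vertex_map g e)"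
  by (metis injI cube_vertex_map_inverse)

lemma even_cube_vertex_map:
  assumes "g permutes {1..4}" "e \<in> {0, 1}"
  shows "even_vertex (cube_vertex_map g e v) \<longleftrightarrow> (even_vertex v \<longleftrightarrow> e = 0)"
  using assms by (auto simp: cube_vertex_map_def even_vertex_perm even_vertex_antipode)

text \<open>For \<open>e = 1\<close> the two vertex types, i.e. the two tetrahedra, are exchanged.\<close>

definition type_swap :: "int \<Rightarrow> nat \<Rightarrow> nat" where
  "type_swap e t = (if e = 0 then t else if t = 1 then 2 else if t = 2 then 1 else t)"

lemma type_swap_eq_iff: "type_swap e s = type_swap e t \<longleftrightarrow> s = t"
  by (auto simp: type_swap_def split: if_splits)

lemma cube_type_vertex_map_image:
  assumes g: "g permutes {1..4}" and e: "e \<in> {0, 1}" and x: "x \<in> cube_X"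
  shows "cube_type (cube_vertex_map g e ` x) = type_swap e (cube_type x)"
proof (cases "card x = 1")
  case True
  then obtain v where "x = {v}" using card_1_singletonE by blast
  then show ?thesis
    using even_cube_vertex_map[OF g e] e by (auto simp: cube_type_singleton type_swap_def)
next
  case False
  have "cube_vertex_map g e ` x \<in> cube_X"
    using preserves_cube_vertex_map[OF g] x by (simp add: preserves_cube_def)
  moreover have "card (cube_vertex_map g e ` x) = card x"
    using inj_cube_vertex_map[OF g e] by (simp add: card_image inj_on_subset)
  ultimately show ?thesis
    using False cube_type_by_card[OF x] cube_type_by_card by (simp add: type_swap_def)
qed

lemma cube_inc_image_iff: "inj \<pi> \<Longrightarrow> cube_inc (\<pi> ` x) (\<pi> ` y) \<longleftrightarrow> cube_inc x y"
  by (auto simp: cube_inc_def inj_image_subset_iff inj_image_eq_iff psubset_eq)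

lemma cube_cor_in_Bij:
  assumes g: "g permutes {1..4}" and e: "e \<in> {0, 1}"
  shows "cube_cor g e \<in> Bij cube_X"
proof -
  have ig: "inv' g permutes {1..4}" using permutes_inv[OF g] .
  have inv: "cube_vertex_map g e (cube_vertex_map (inv' g) e v) = v" for v
    using cube_vertex_map_inverse[OF ig e] permutes_inv_inv[OF g] by simp
  have maps: "cube_vertex_map h e ` x \<in> cube_X" if "h permutes {1..4}" "x \<in> cube_X" for h x
    using preserves_cube_vertex_map[OF that(1)] that(2) by (simp add: preserves_cube_def)
  have "bij_betw (cube_cor g e) cube_X cube_X"
  proof (rule bij_betw_byWitness[where f' = "cube_cor (inv' g) e"])
    show "\<forall>x\<in>cube_X. cube_cor (inv' g) e (cube_cor g e x) = x"
      using maps[OF g] cube_vertex_map_inverse[OF g e] by (simp add: cube_cor_def image_image)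
    show "\<forall>x\<in>cube_X. cube_cor g e (cube_cor (inv' g) e x) = x"
      using maps[OF ig] inv by (simp add: cube_cor_def image_image)
  qed (use maps[OF g] maps[OF ig] in \<open>auto simp: cube_cor_def\<close>)
  then show ?thesis by (simp add: Bij_def cube_cor_def)
qed

lemma cube_cor_correlation:
  assumes g: "g permutes {1..4}" and e: "e \<in> {0, 1}"
  shows "cube_cor g e \<in> correlations cube_X cube_inc cube_type"
  using cube_cor_in_Bij[OF g e] cube_type_vertex_map_image[OF g e]
    cube_inc_image_iff[OF inj_cube_vertex_map[OF g e]]
  by (simp add: correlations_def cube_cor_def type_swap_eq_iff)

lemma cube_cor_hom: "case_prod cube_cor \<in> hom Sym4xC2 (CorGroup cube_X cube_inc cube_type)"
proof (rule homI)
  fix x assume "x \<in> carrier Sym4xC2"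
  then show "case_prod cube_cor x \<in> carrier (CorGroup cube_X cube_inc cube_type)"
    using cube_cor_correlation by (auto simp: carrier_Sym4xC2 CorGroup_def)
next
  fix x y assume "x \<in> carrier Sym4xC2" "y \<in> carrier Sym4xC2"
  then obtain g e h f where x: "x = (g, e)" and y: "y = (h, f)" and g: "g permutes {1..4}"
    and h: "h permutes {1..4}" and e: "e \<in> {0, 1}" and f: "f \<in> {0, 1}"
    by (auto simp: carrier_Sym4xC2)
  have "compose cube_X (cube_cor g e) (cube_cor h f) = cube_cor (g \<circ> h) ((e + f) mod 2)"
  proof
    fix z show "compose cube_X (cube_cor g e) (cube_cor h f) z = cube_cor (g \<circ> h) ((e + f) mod 2) z"
    proof (cases "z \<in> cube_X")
      case True
      have "cube_vertex_map h f ` z \<in> cube_X"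
        using preserves_cube_vertex_map[OF h] True by (simp add: preserves_cube_def)
      then show ?thesis
        using True cube_vertex_map_comp[OF h e f, of g] by (simp add: compose_def cube_cor_def image_image)
    qed (simp add: compose_def cube_cor_def)
  qed
  then show "case_prod cube_cor (x \<otimes>\<^bsub>Sym4xC2\<^esub> y) =
      case_prod cube_cor x \<otimes>\<^bsub>CorGroup cube_X cube_inc cube_type\<^esub> case_prod cube_cor y"
    using x y cube_cor_in_Bij[OF g e] cube_cor_in_Bij[OF h f]
    by (simp add: mult_Sym4xC2 CorGroup_def BijGroup_def)
qed

lemma cube_cor_inj:
  assumes g: "g permutes {1..4}" and e: "e \<in> {0, 1}" and h: "h permutes {1..4}" and f: "f \<in> {0, 1}"
    and eq: "cube_cor g e = cube_cor h f"
  shows "g = h \<and> e = f"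
proof -
  have pt: "cube_vertex_map g e v = cube_vertex_map h f v" for v
    using fun_cong[OF eq, of "{v}"] singleton_in_cube_X[of v] by (simp add: cube_cor_def)
  have "even_vertex (tet_vertex 1)" by (simp add: even_vertex_iff)
  then have "e = 0 \<longleftrightarrow> f = 0"
    using pt[of "tet_vertex 1"] even_cube_vertex_map[OF g e] even_cube_vertex_map[OF h f] by metis
  then have "e = f" using e f by auto
  have gi: "g i = h i" if i: "i \<in> {1..4}" for i
  proof -
    have "vertex_perm g (tet_vertex i) = vertex_perm h (tet_vertex i)"
      using pt[of "tet_vertex i"] \<open>e = f\<close> by (cases "f = 0") (auto simp: cube_vertex_map_def antipode_eq_iff)
    then have "tet_vertex (g i) = tet_vertex (h i)" using vertex_perm_tet_vertex[OF i] by simp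
    moreover have "g i \<in> {1..4}" "h i \<in> {1..4}"
      using i by (simp_all only: permutes_in_image[OF g] permutes_in_image[OF h])
    ultimately show ?thesis using tet_vertex_inj by blast
  qed
  then have "g 1 = h 1" "g 2 = h 2" "g 3 = h 3" "g 4 = h 4" by simp_all
  then have "g = h" using permutes_eq_perm4[OF g] permutes_eq_perm4[OF h] by metis
  with \<open>e = f\<close> show ?thesis by simp
qed

section \<open>Correlations of the cube\<close>

lemma correlationsD:
  assumes "\<alpha> \<in> correlations E inc t"
  shows "\<alpha> ` E = E" "inj_on \<alpha> E" "\<alpha> \<in> extensional E"
    and "x \<in> E \<Longrightarrow> y \<in> E \<Longrightarrow> t (\<alpha> x) = t (\<alpha> y) \<longleftrightarrow> t x = t y"
    and "x \<in> E \<Longrightarrow> y \<in> E \<Longrightarrow> inc (\<alpha> x) (\<alpha> y) \<longleftrightarrow> inc x y"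
  using assms by (auto simp: correlations_def Bij_def bij_betw_def)

text \<open>In the cube this property singles out the vertices; being invariant under correlations,
  it shows that correlations map vertices to vertices.\<close>

definition has_unrelated_type :: "'x set \<Rightarrow> ('x \<Rightarrow> 'x \<Rightarrow> bool) \<Rightarrow> ('x \<Rightarrow> 'i) \<Rightarrow> 'x \<Rightarrow> bool" where
  "has_unrelated_type E inc t x \<longleftrightarrow>
     (\<exists>y\<in>E. t y \<noteq> t x \<and> (\<forall>x'\<in>E. \<forall>y'\<in>E. t x' = t x \<longrightarrow> t y' = t y \<longrightarrow> \<not> inc x' y'))"

lemma correlation_has_unrelated_type_iff:
  assumes \<alpha>: "\<alpha> \<in> correlations E inc t" and x: "x \<in> E"
  shows "has_unrelated_type E inc t (\<alpha> x) \<longleftrightarrow> has_unrelated_type E inc t x"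
proof -
  note D = correlationsD[OF \<alpha>]
  have "has_unrelated_type E inc t (\<alpha> x) \<longleftrightarrow> (\<exists>y\<in>\<alpha> ` E. t y \<noteq> t (\<alpha> x) \<and>
      (\<forall>x'\<in>\<alpha> ` E. \<forall>y'\<in>\<alpha> ` E. t x' = t (\<alpha> x) \<longrightarrow> t y' = t y \<longrightarrow> \<not> inc x' y'))"
    by (simp only: D(1) has_unrelated_type_def)
  also have "\<dots> \<longleftrightarrow> has_unrelated_type E inc t x"
    using x by (auto simp: D(4,5) has_unrelated_type_def)
  finally show ?thesis .
qed

lemma correlation_common_incident_iff:
  assumes \<alpha>: "\<alpha> \<in> correlations E inc t" and "x \<in> E" "y \<in> E"
  shows "(\<exists>z\<in>E. inc (\<alpha> x) z \<and> inc (\<alpha> y) z) \<longleftrightarrow> (\<exists>z\<in>E. inc x z \<and> inc y z)"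
proof -
  note D = correlationsD[OF \<alpha>]
  have "(\<exists>z\<in>E. inc (\<alpha> x) z \<and> inc (\<alpha> y) z) \<longleftrightarrow> (\<exists>z\<in>\<alpha> ` E. inc (\<alpha> x) z \<and> inc (\<alpha> y) z)"
    by (simp only: D(1))
  also have "\<dots> \<longleftrightarrow> (\<exists>z\<in>E. inc x z \<and> inc y z)"
    using assms(2,3) by (auto simp: D(5))
  finally show ?thesis .
qed

lemma cube_inc_singleton_iff:
  assumes "z \<in> cube_X"
  shows "cube_inc {w} z \<longleftrightarrow> w \<in> z \<and> z \<notin> cube_vertices"
proof -
  have "\<not> z \<subset> {w}" using assms empty_notin_cube_X by (auto simp: subset_singleton_iff)
  moreover have "{w} \<subset> z \<longleftrightarrow> w \<in> z \<and> z \<notin> cube_vertices"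
    unfolding cube_vertices_iff by blast
  ultimately show ?thesis unfolding cube_inc_def by blast
qed

definition type_rep :: "nat \<Rightarrow> cvert set" where
  "type_rep k =
     (if k = 1 then {(False, False, False)} else if k = 2 then {(True, False, False)}
      else if k = 3 then {(False, False, False), (True, False, False)} else cube_face 1 False)"

lemma type_rep:
  assumes "k \<in> {1, 2, 3, 4}"
  shows "type_rep k \<in> cube_X" "cube_type (type_rep k) = k"
proof -
  have adj: "cube_adj (False, False, False) (True, False, False)" by (simp add: cube_adj_def)
  show "type_rep k \<in> cube_X"
    using singleton_in_cube_X edge_in_cube_X[OF adj] face_in_cube_X[of 1] by (simp add: type_rep_def)
  show "cube_type (type_rep k) = k"
    using assms cube_type_edge[OF adj] cube_type_face[of 1 False]
    by (auto simp: type_rep_def cube_type_singleton even_vertex_iff)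
qed

lemma cube_inc_type_rep:
  assumes "a \<in> {1, 2, 3, 4}" "b \<in> {1, 2, 3, 4}" "a \<noteq> b" "a \<notin> {1, 2} \<or> b \<notin> {1, 2}"
  shows "cube_inc (type_rep a) (type_rep b)"
proof -
  have "cube_inc (type_rep 1) (type_rep 3)" "cube_inc (type_rep 2) (type_rep 3)"
    "cube_inc (type_rep 1) (type_rep 4)" "cube_inc (type_rep 2) (type_rep 4)"
    "cube_inc (type_rep 3) (type_rep 4)"
  proof -
    have "cube_face 1 False = {(False, False, False), (False, False, True), (True, False, False),
        (True, False, True)}"
      by (simp add: cube_face_explicit)
    then have r: "type_rep 1 = {(False, False, False)}" "type_rep 2 = {(True, False, False)}"
      "type_rep 3 = {(False, False, False), (True, False, False)}"
      "type_rep 4 = {(False, False, False), (False, False, True), (True, False, False), (True, False, True)}"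
      by (simp_all add: type_rep_def)
    show "cube_inc (type_rep 1) (type_rep 3)" "cube_inc (type_rep 2) (type_rep 3)"
      "cube_inc (type_rep 1) (type_rep 4)" "cube_inc (type_rep 2) (type_rep 4)"
      "cube_inc (type_rep 3) (type_rep 4)"
      unfolding r cube_inc_def by blast+
  qed
  then show ?thesis
    using assms cube_inc_sym by (simp only: insert_iff empty_iff) (elim disjE; simp)
qed

lemma has_unrelated_type_cube_iff:
  assumes x: "x \<in> cube_X"
  shows "has_unrelated_type cube_X cube_inc cube_type x \<longleftrightarrow> x \<in> cube_vertices"
proof
  assume "has_unrelated_type cube_X cube_inc cube_type x"
  then obtain y where y: "y \<in> cube_X" "cube_type y \<noteq> cube_type x"
    and none: "\<forall>x'\<in>cube_X. \<forall>y'\<in>cube_X. cube_type x' = cube_type x \<longrightarrow> cube_type y' = cube_type y \<longrightarrow>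
        \<not> cube_inc x' y'"
    unfolding has_unrelated_type_def by blast
  show "x \<in> cube_vertices"
  proof (rule ccontr)
    assume "x \<notin> cube_vertices"
    then have "cube_type x \<notin> {1, 2}" using cube_type_vertex_iff[of x] by blast
    then have "cube_inc (type_rep (cube_type x)) (type_rep (cube_type y))"
      using cube_inc_type_rep[OF cube_type_range cube_type_range y(2)[symmetric]] by simp
    moreover note rx = type_rep[OF cube_type_range[of x]] and ry = type_rep[OF cube_type_range[of y]]
    ultimately show False using none[rule_format, OF rx(1) ry(1)] by simp
  qed
next
  assume "x \<in> cube_vertices"
  then obtain v where v: "x = {v}" unfolding cube_vertices_iff by blast
  show "has_unrelated_type cube_X cube_inc cube_type x"
    unfolding has_unrelated_type_def
  proof (intro bexI[of _ "{antipode v}"] conjI ballI impI)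
    show "cube_type {antipode v} \<noteq> cube_type x"
      using v by (simp add: cube_type_singleton even_vertex_antipode)
    fix x' y' assume "x' \<in> cube_X" "y' \<in> cube_X"
      and "cube_type x' = cube_type x" "cube_type y' = cube_type {antipode v}"
    then have "cube_type x' \<in> {1, 2}" "cube_type y' \<in> {1, 2}"
      using v by (simp_all add: cube_type_singleton)
    then have "x' \<in> cube_vertices" "y' \<in> cube_vertices" by (simp_all only: cube_type_vertex_iff)
    then obtain a b where "x' = {a}" "y' = {b}" unfolding cube_vertices_iff by blast
    then show "\<not> cube_inc x' y'" by (simp add: cube_inc_def psubset_eq)
  qed (rule singleton_in_cube_X)
qed

lemma common_incident_singletons_iff:
  "(\<exists>z\<in>cube_X. cube_inc {u} z \<and> cube_inc {v} z) \<longleftrightarrow> v \<noteq> antipode u"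
proof
  assume "\<exists>z\<in>cube_X. cube_inc {u} z \<and> cube_inc {v} z"
  then obtain z where z: "z \<in> cube_X" "u \<in> z" "v \<in> z" "z \<notin> cube_vertices"
    using cube_inc_singleton_iff by blast
  show "v \<noteq> antipode u"
  proof
    assume v: "v = antipode u"
    from z(1) show False
    proof (cases rule: cube_X_cases)
      case (vertex w) then show False using z(4) unfolding cube_vertices_iff by blast
    next
      case (edge p q)
      have "u \<noteq> antipode u" by (cases u) auto
      then have "{p, q} = {u, antipode u}" using z v edge by auto
      then show False using edge(2) by (cases u) (auto simp: doubleton_eq_iff cube_adj_def)
    next
      case (face i b)
      then show False using z v less_3_cases[of i] by (cases u) (auto simp: cube_face_def)
    qed
  qed
next
  assume "v \<noteq> antipode u"
  then have "\<exists>i<3. coord u i = coord v i"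
    by (cases u; cases v) (auto intro: exI[of _ 0] exI[of _ 1] exI[of _ 2])
  then obtain i where i: "i < 3" "coord u i = coord v i" by blast
  moreover have "cube_face i (coord u i) \<notin> cube_vertices"
    using cube_type_vertex_iff[of "cube_face i (coord u i)"] cube_type_face[OF i(1)] by simp
  ultimately have "cube_face i (coord u i) \<in> cube_X" "u \<in> cube_face i (coord u i)"
    "v \<in> cube_face i (coord u i)" "cube_face i (coord u i) \<notin> cube_vertices"
    using face_in_cube_X by (auto simp: cube_face_def)
  then show "\<exists>z\<in>cube_X. cube_inc {u} z \<and> cube_inc {v} z" using cube_inc_singleton_iff by blast
qed

lemma correlation_vertex_action:
  assumes \<alpha>: "\<alpha> \<in> correlations cube_X cube_inc cube_type"
  obtains \<pi> where "inj \<pi>" "\<And>x. x \<in> cube_X \<Longrightarrow> \<alpha> x = \<pi> ` x"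
proof -
  note D = correlationsD[OF \<alpha>]
  have in_X: "\<alpha> x \<in> cube_X" if "x \<in> cube_X" for x using D(1) that by blast
  have vertex_iff: "\<alpha> x \<in> cube_vertices \<longleftrightarrow> x \<in> cube_vertices" if "x \<in> cube_X" for x
    using correlation_has_unrelated_type_iff[OF \<alpha> that] has_unrelated_type_cube_iff[OF that]
      has_unrelated_type_cube_iff[OF in_X[OF that]] by simp
  have "\<exists>w. \<alpha> {v} = {w}" for v
    using vertex_iff[OF singleton_in_cube_X, of v] unfolding cube_vertices_iff by blast
  then obtain \<pi> where \<pi>: "\<And>v. \<alpha> {v} = {\<pi> v}" by metis
  have "inj \<pi>"
  proof (rule injI)
    fix u v assume "\<pi> u = \<pi> v"
    then have "{u} = {v}" using \<pi> inj_onD[OF D(2) _ singleton_in_cube_X singleton_in_cube_X] by metis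
    then show "u = v" by simp
  qed
  moreover have "\<alpha> x = \<pi> ` x" if x: "x \<in> cube_X" for x
  proof (cases "x \<in> cube_vertices")
    case True
    then show ?thesis using \<pi> unfolding cube_vertices_iff by auto
  next
    case False
    have "\<pi> u \<in> \<alpha> x \<longleftrightarrow> u \<in> x" for u
    proof -
      have "\<pi> u \<in> \<alpha> x \<longleftrightarrow> cube_inc (\<alpha> {u}) (\<alpha> x)"
        using cube_inc_singleton_iff[OF in_X[OF x]] vertex_iff[OF x] False \<pi> by simp
      also have "\<dots> \<longleftrightarrow> u \<in> x"
        using D(5)[OF singleton_in_cube_X x] cube_inc_singleton_iff[OF x] False by simp
      finally show ?thesis .
    qed
    note mem = this
    show ?thesis
    proof (rule Set.set_eqI)
      fix w
      obtain u where w: "w = \<pi> u"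
        using finite_UNIV_inj_surj[OF finite_UNIV \<open>inj \<pi>\<close>] by (metis surjD)
      show "w \<in> \<alpha> x \<longleftrightarrow> w \<in> \<pi> ` x" using mem[of u] inj_image_mem_iff[OF \<open>inj \<pi>\<close>] w by simp
    qed
  qed
  ultimately show ?thesis using that by blast
qed

lemma cube_vertex_map_cases:
  assumes "inj \<pi>" and e: "e \<in> {0, 1}"
    and antipode: "\<And>u. \<pi> (antipode u) = antipode (\<pi> u)"
    and parity: "\<And>v. even_vertex (\<pi> v) \<longleftrightarrow> (even_vertex v \<longleftrightarrow> e = 0)"
  obtains g where "g permutes {1..4}" "\<pi> = cube_vertex_map g e"
proof -
  define \<rho> where "\<rho> = (if e = 0 then \<pi> else antipode \<circ> \<pi>)"
  have \<pi>_eq: "\<pi> v = (if e = 0 then \<rho> v else antipode (\<rho> v))" for v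
    by (simp add: \<rho>_def)
  have \<rho>_even: "even_vertex (\<rho> v) \<longleftrightarrow> even_vertex v" for v
    using parity[of v] by (auto simp: \<rho>_def even_vertex_antipode)
  have "inj \<rho>" using \<open>inj \<pi>\<close> by (auto simp: \<rho>_def inj_def antipode_eq_iff)
  define g where "g i = (if i \<in> {1..4} then (SOME j. j \<in> {1..4} \<and> \<rho> (tet_vertex i) = tet_vertex j) else i)"
    for i
  have g: "g i \<in> {1..4} \<and> \<rho> (tet_vertex i) = tet_vertex (g i)" if i: "i \<in> {1..4}" for i
  proof -
    obtain j where "j \<in> {1..4}" "\<rho> (tet_vertex i) = tet_vertex j"
      using even_vertex_imp_tet_vertex \<rho>_even even_tet_vertex[OF i] by metis
    then have "\<exists>j. j \<in> {1..4} \<and> \<rho> (tet_vertex i) = tet_vertex j" by blast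
    from someI_ex[OF this] show ?thesis using i by (simp add: g_def)
  qed
  have "inj_on g {1..4}"
  proof (rule inj_onI)
    fix i j assume i: "i \<in> {1..4}" and j: "j \<in> {1..4}" and "g i = g j"
    then have "\<rho> (tet_vertex i) = \<rho> (tet_vertex j)" using g[OF i] g[OF j] by simp
    then show "i = j" using tet_vertex_inj[OF i j] injD[OF \<open>inj \<rho>\<close>] by blast
  qed
  moreover have "g ` {1..4} \<subseteq> {1..4}" using g by blast
  ultimately have "bij_betw g {1..4} {1..4}"
    by (simp add: bij_betw_def endo_inj_surj)
  then have g_perm: "g permutes {1..4}"
  proof (rule bij_imp_permutes)
    fix i :: nat assume "i \<notin> {1..4}" then show "g i = i" by (simp only: g_def if_False)
  qed
  have "\<pi> v = cube_vertex_map g e v" for v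
  proof (cases v rule: cube_vertex_cases)
    case (even i)
    then show ?thesis
      using g[OF even(1)] vertex_perm_tet_vertex[OF even(1), of g] \<pi>_eq[of v]
      by (simp add: cube_vertex_map_def)
  next
    case (odd i)
    then show ?thesis
      using g[OF odd(1)] vertex_perm_antipode_tet_vertex[OF odd(1), of g] \<pi>_eq[of "tet_vertex i"]
        antipode[of "tet_vertex i"]
      by (simp add: cube_vertex_map_def)
  qed
  with g_perm that show ?thesis by blast
qed

lemma correlation_eq_cube_cor:
  assumes \<alpha>: "\<alpha> \<in> correlations cube_X cube_inc cube_type"
  obtains g e where "g permutes {1..4}" "e \<in> {0, 1}" "\<alpha> = cube_cor g e"
proof -
  note D = correlationsD[OF \<alpha>]
  obtain \<pi> where "inj \<pi>" and \<alpha>_\<pi>: "\<And>x. x \<in> cube_X \<Longrightarrow> \<alpha> x = \<pi> ` x"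
    using correlation_vertex_action[OF \<alpha>] by blast
  have antipode: "\<pi> (antipode u) = antipode (\<pi> u)" for u
  proof -
    have "\<not> (\<exists>z\<in>cube_X. cube_inc {\<pi> u} z \<and> cube_inc {\<pi> (antipode u)} z)"
      using correlation_common_incident_iff[OF \<alpha> singleton_in_cube_X singleton_in_cube_X, of u "antipode u"]
        common_incident_singletons_iff[of u "antipode u"] \<alpha>_\<pi>[OF singleton_in_cube_X] by simp
    then show ?thesis using common_incident_singletons_iff by blast
  qed
  define e :: int where "e = (if even_vertex (\<pi> (tet_vertex 1)) then 0 else 1)"
  have e: "e \<in> {0, 1}" by (simp add: e_def)
  have parity: "even_vertex (\<pi> v) \<longleftrightarrow> (even_vertex v \<longleftrightarrow> e = 0)" for v
  proof -
    have "cube_type {\<pi> v} = cube_type {\<pi> (tet_vertex 1)} \<longleftrightarrow> cube_type {v} = cube_type {tet_vertex 1}"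
      using D(4)[OF singleton_in_cube_X singleton_in_cube_X] \<alpha>_\<pi>[OF singleton_in_cube_X] by simp
    moreover have "even_vertex (tet_vertex 1)" by (simp add: even_vertex_iff)
    ultimately show ?thesis by (simp add: e_def cube_type_singleton split: if_splits)
  qed
  obtain g where g: "g permutes {1..4}" and "\<pi> = cube_vertex_map g e"
    using cube_vertex_map_cases[OF \<open>inj \<pi>\<close> e antipode parity] by blast
  have "\<alpha> = cube_cor g e"
  proof
    fix x show "\<alpha> x = cube_cor g e x"
      using \<alpha>_\<pi>[of x] extensional_arb[OF D(3), of x] \<open>\<pi> = cube_vertex_map g e\<close>
      by (cases "x \<in> cube_X") (simp_all add: cube_cor_def)
  qed
  with g e that show ?thesis by blast
qed

lemma cube_cor_iso: "case_prod cube_cor \<in> iso Sym4xC2 (CorGroup cube_X cube_inc cube_type)"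
proof -
  have "inj_on (case_prod cube_cor) (carrier Sym4xC2)"
  proof (rule inj_onI)
    fix x y assume "x \<in> carrier Sym4xC2" "y \<in> carrier Sym4xC2"
      and eq: "case_prod cube_cor x = case_prod cube_cor y"
    then obtain g e h f where "x = (g, e)" "y = (h, f)" "g permutes {1..4}" "h permutes {1..4}"
      "e \<in> {0, 1}" "f \<in> {0, 1}"
      by (auto simp: carrier_Sym4xC2)
    with cube_cor_inj[of g e h f] eq show "x = y" by simp
  qed
  moreover have "case_prod cube_cor ` carrier Sym4xC2 = correlations cube_X cube_inc cube_type"
  proof
    show "case_prod cube_cor ` carrier Sym4xC2 \<subseteq> correlations cube_X cube_inc cube_type"
      by (auto simp: carrier_Sym4xC2 intro: cube_cor_correlation)
    show "correlations cube_X cube_inc cube_type \<subseteq> case_prod cube_cor ` carrier Sym4xC2"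
    proof
      fix \<alpha> assume "\<alpha> \<in> correlations cube_X cube_inc cube_type"
      then obtain g e where "g permutes {1..4}" "e \<in> {0, 1}" "\<alpha> = cube_cor g e"
        by (rule correlation_eq_cube_cor)
      then show "\<alpha> \<in> case_prod cube_cor ` carrier Sym4xC2"
        by (intro image_eqI[where x = "(g, e)"]) (simp_all add: carrier_Sym4xC2)
    qed
  qed
  ultimately show ?thesis using cube_cor_hom by (simp add: iso_iff CorGroup_def)
qed

lemma type_preserving_correlations_cube:
  "type_preserving_correlations cube_X cube_inc cube_type =
     case_prod cube_cor ` ({p. p permutes {1..4}} \<times> {0})"
proof -
  have "(\<forall>x\<in>cube_X. cube_type (cube_cor g e x) = cube_type x) \<longleftrightarrow> e = 0"
    if g: "g permutes {1..4}" and e: "e \<in> {0, 1}" for g e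
  proof -
    have "cube_type (cube_cor g e x) = type_swap e (cube_type x)" if "x \<in> cube_X" for x
      using cube_type_vertex_map_image[OF g e that] that by (simp add: cube_cor_def)
    moreover have "cube_type {tet_vertex 1} = 1" by (simp add: cube_type_singleton even_vertex_iff)
    ultimately show ?thesis
      using e singleton_in_cube_X by (auto simp: type_swap_def)
  qed
  note type_pres_iff = this
  show ?thesis
  proof
    show "type_preserving_correlations cube_X cube_inc cube_type \<subseteq>
        case_prod cube_cor ` ({p. p permutes {1..4}} \<times> {0})"
    proof
      fix \<alpha> assume "\<alpha> \<in> type_preserving_correlations cube_X cube_inc cube_type"
      then have \<alpha>: "\<alpha> \<in> correlations cube_X cube_inc cube_type"
        and pres: "\<forall>x\<in>cube_X. cube_type (\<alpha> x) = cube_type x"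
        by (simp_all add: type_preserving_correlations_def)
      obtain g e where g: "g permutes {1..4}" and e: "e \<in> {0, 1}" and "\<alpha> = cube_cor g e"
        using correlation_eq_cube_cor[OF \<alpha>] by blast
      with pres type_pres_iff[OF g e] show "\<alpha> \<in> case_prod cube_cor ` ({p. p permutes {1..4}} \<times> {0})"
        by (intro image_eqI[where x = "(g, 0)"]) simp_all
    qed
    show "case_prod cube_cor ` ({p. p permutes {1..4}} \<times> {0}) \<subseteq>
        type_preserving_correlations cube_X cube_inc cube_type"
      using type_pres_iff cube_cor_correlation by (auto simp: type_preserving_correlations_def)
  qed
qed

lemma incidence_geometric_representationI:
  assumes "incidence_system E inc t Ty" and "group H"
    and \<alpha>: "\<alpha> \<in> iso H (AutoGroup G)" and \<phi>: "\<phi> \<in> iso H (CorGroup E inc t)"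
    and K: "K \<subseteq> carrier H" "\<alpha> ` K = inner_autos G" "\<phi> ` K = type_preserving_correlations E inc t"
  shows "incidence_geometric_representation G E inc t Ty"
proof -
  define \<psi> where "\<psi> = \<phi> \<circ> inv_into (carrier H) \<alpha>"
  have \<psi>: "\<psi> \<in> iso (AutoGroup G) (CorGroup E inc t)"
    unfolding \<psi>_def by (rule iso_set_trans[OF group.iso_set_sym[OF \<open>group H\<close> \<alpha>] \<phi>])
  have \<alpha>_inj: "inj_on \<alpha> (carrier H)" and \<alpha>_carrier: "\<alpha> ` carrier H = auto G"
    using \<alpha> by (simp_all add: iso_iff AutoGroup_def)
  have "inner_autos G \<subseteq> \<alpha> ` carrier H" unfolding K(2)[symmetric] using K(1) by blast
  then have inner_sub: "inner_autos G \<subseteq> carrier (AutoGroup G)"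
    using \<alpha>_carrier by (simp add: AutoGroup_def)
  have "\<psi> (\<alpha> k) = \<phi> k" if "k \<in> K" for k
    using that K(1) \<alpha>_inj by (auto simp: \<psi>_def inv_into_f_f)
  then have "\<psi> ` inner_autos G = \<phi> ` K"
    unfolding K(2)[symmetric] image_image by (rule image_cong[OF refl])
  then have \<psi>_inner: "\<psi> ` inner_autos G = type_preserving_correlations E inc t"
    using K(3) by simp
  have "\<psi> \<in> iso (InnGroup G) (TypePresCorGroup E inc t)"
  proof -
    have "\<psi> \<in> hom (InnGroup G) (TypePresCorGroup E inc t)"
    proof (rule homI)
      fix a assume "a \<in> carrier (InnGroup G)"
      then show "\<psi> a \<in> carrier (TypePresCorGroup E inc t)"
        using \<psi>_inner by (auto simp: InnGroup_def TypePresCorGroup_def)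
    next
      fix a b assume "a \<in> carrier (InnGroup G)" "b \<in> carrier (InnGroup G)"
      then show "\<psi> (a \<otimes>\<^bsub>InnGroup G\<^esub> b) = \<psi> a \<otimes>\<^bsub>TypePresCorGroup E inc t\<^esub> \<psi> b"
        using hom_mult[OF iso_imp_homomorphism[OF \<psi>]] inner_sub
        by (auto simp: InnGroup_def TypePresCorGroup_def CorGroup_def)
    qed
    moreover have "inj_on \<psi> (carrier (InnGroup G))"
      using \<psi> inner_sub by (auto simp: iso_iff InnGroup_def intro: inj_on_subset)
    ultimately show ?thesis
      using \<psi>_inner by (simp add: iso_iff InnGroup_def TypePresCorGroup_def)
  qed
  then show ?thesis
    using assms(1) \<psi> unfolding incidence_geometric_representation_def by (auto simp: InnGroup_def)
qed

theorem mainTheorem3: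
  shows "incidence_geometric_representation Sym4xC2 cube_X cube_inc cube_type cube_I"
proof (rule incidence_geometric_representationI)
  show "incidence_system cube_X cube_inc cube_type cube_I" by (rule cube_incidence_system)
  show "group Sym4xC2" by (rule group_Sym4xC2)
  show "case_prod sym4xC2_aut \<in> iso Sym4xC2 (AutoGroup Sym4xC2)" by (rule sym4xC2_aut_iso)
  show "case_prod cube_cor \<in> iso Sym4xC2 (CorGroup cube_X cube_inc cube_type)" by (rule cube_cor_iso)
  show "{p. p permutes {1..4}} \<times> {0} \<subseteq> carrier Sym4xC2" by (auto simp: carrier_Sym4xC2)
  show "case_prod sym4xC2_aut ` ({p. p permutes {1..4}} \<times> {0}) = inner_autos Sym4xC2"
    by (rule inner_autos_Sym4xC2[symmetric])
  show "case_prod cube_cor ` ({p. p permutes {1..4}} \<times> {0}) =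
      type_preserving_correlations cube_X cube_inc cube_type"
    by (rule type_preserving_correlations_cube[symmetric])
qed

end
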